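(* Let $K$ be an algebraically closed field of characteristic $2$, let $B\in K[x_1,x_2,x_3]$ be homogeneous of degree $4$ and let $\mathcal{C}_B=\{x\in\mathbb{P}^2\mid \nabla B(x)=0\}$. Consider $$X=\{w^4+w^2x_1^2+B(x_1,x_2,x_3)=0\}\subset\mathbb{P}^3_K$$ with coordinates $(w,x_1,x_2,x_3)$. If $\mathcal{C}_B$ is finite and $\mathcal{C}_B\cap\{x_1=0\}=\emptyset$, then $X$ has finitely many singular points and $|\mathrm{Sing}(X)|=2|\mathcal{C}_B|$. For a general quartic $B$, $X$ has exactly $14$ singular points, and they are nodes.
   Context: A node ($A_1$-singularity) is a double point whose projectivized tangent cone is a smooth conic. *)

theory Defs
  imports "HOL-Computational_Algebra.Computational_Algebra"
begin

text \<open>Polynomials are represented explicitly by coefficient functions on monomials.\<close>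

definition mons :: "'v set \<Rightarrow> nat \<Rightarrow> ('v \<Rightarrow> nat) set" where
  "mons V d = {m. (\<forall>v. v \<notin> V \<longrightarrow> m v = 0) \<and> sum m V = d}"

definition mons_le :: "'v set \<Rightarrow> nat \<Rightarrow> ('v \<Rightarrow> nat) set" where
  "mons_le V D = {m. (\<forall>v. v \<notin> V \<longrightarrow> m v = 0) \<and> sum m V \<le> D}"

definition peval :: "'v set \<Rightarrow> nat \<Rightarrow> (('v \<Rightarrow> nat) \<Rightarrow> 'a::comm_ring_1) \<Rightarrow> ('v \<Rightarrow> 'a) \<Rightarrow> 'a" where
  "peval V D c x = (\<Sum>m\<in>mons_le V D. c m * (\<Prod>v\<in>V. x v ^ m v))"

definition heval :: "'v set \<Rightarrow> nat \<Rightarrow> (('v \<Rightarrow> nat) \<Rightarrow> 'a::comm_ring_1) \<Rightarrow> ('v \<Rightarrow> 'a) \<Rightarrow> 'a" where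
  "heval V d c x = (\<Sum>m\<in>mons V d. c m * (\<Prod>v\<in>V. x v ^ m v))"

text \<open>Hasse derivative D^alpha of the form at x (= coefficient of y^alpha in F(x+y)).\<close>
definition hasse :: "'v set \<Rightarrow> nat \<Rightarrow> (('v \<Rightarrow> nat) \<Rightarrow> 'a::comm_ring_1) \<Rightarrow> ('v \<Rightarrow> nat) \<Rightarrow> ('v \<Rightarrow> 'a) \<Rightarrow> 'a" where
  "hasse V d c \<alpha> x = (\<Sum>m\<in>mons V d. c m *
      (\<Prod>v\<in>V. of_nat (m v choose \<alpha> v) * x v ^ (m v - \<alpha> v)))"

definition hpd :: "'v set \<Rightarrow> nat \<Rightarrow> (('v \<Rightarrow> nat) \<Rightarrow> 'a::comm_ring_1) \<Rightarrow> 'v \<Rightarrow> ('v \<Rightarrow> 'a) \<Rightarrow> 'a" where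
  "hpd V d c u x = hasse V d c (\<lambda>v. if v = u then 1 else 0) x"

definition nzvec :: "'v set \<Rightarrow> ('v \<Rightarrow> 'a::zero) set" where
  "nzvec V = {x. (\<forall>v. v \<notin> V \<longrightarrow> x v = 0) \<and> (\<exists>v\<in>V. x v \<noteq> 0)}"

definition proj_class :: "'v set \<Rightarrow> ('v \<Rightarrow> 'a::field) \<Rightarrow> ('v \<Rightarrow> 'a) set" where
  "proj_class V x = {y. (\<forall>v. v \<notin> V \<longrightarrow> y v = 0) \<and> (\<exists>c. c \<noteq> 0 \<and> (\<forall>v\<in>V. y v = c * x v))}"

definition proj_space :: "'v set \<Rightarrow> ('v \<Rightarrow> 'a::field) set set" where
  "proj_space V = proj_class V ` nzvec V"

definition is_sing_vec :: "'v set \<Rightarrow> nat \<Rightarrow> (('v \<Rightarrow> nat) \<Rightarrow> 'a::field) \<Rightarrow> ('v \<Rightarrow> 'a) \<Rightarrow> bool" where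
  "is_sing_vec V d c x \<longleftrightarrow> x \<in> nzvec V \<and> heval V d c x = 0 \<and> (\<forall>u\<in>V. hpd V d c u x = 0)"

definition Sing :: "'v set \<Rightarrow> nat \<Rightarrow> (('v \<Rightarrow> nat) \<Rightarrow> 'a::field) \<Rightarrow> ('v \<Rightarrow> 'a) set set" where
  "Sing V d c = proj_class V ` {x. is_sing_vec V d c x}"

definition smooth_hyp :: "'v set \<Rightarrow> nat \<Rightarrow> (('v \<Rightarrow> nat) \<Rightarrow> 'a::field) \<Rightarrow> bool" where
  "smooth_hyp V d c \<longleftrightarrow> \<not> (\<exists>x. is_sing_vec V d c x)"

text \<open>Node: a double point whose projectivized tangent cone is a smooth conic.
  In the affine chart x_{v0} = 1 (representative y with y v0 = 1), the Taylor expansion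
  of the local equation at the point has vanishing terms of order 0 and 1, and its
  quadratic part (coefficients = Hasse derivatives of order 2 in the chart variables)
  defines a smooth conic in P(K^(V - {v0})).\<close>
definition is_node :: "'v set \<Rightarrow> nat \<Rightarrow> (('v \<Rightarrow> nat) \<Rightarrow> 'a::field) \<Rightarrow> ('v \<Rightarrow> 'a) set \<Rightarrow> bool" where
  "is_node V d c P \<longleftrightarrow> P \<in> Sing V d c \<and>
     (\<forall>v0\<in>V. \<forall>y\<in>P. y v0 = 1 \<longrightarrow>
        smooth_hyp (V - {v0}) 2 (\<lambda>\<alpha>. hasse V d c \<alpha> y))"

text \<open>The quartic X = {w^4 + w^2 x1^2 + B(x1,x2,x3) = 0} in P^3, coordinates
  (w,x1,x2,x3) indexed by 0,1,2,3; B has coefficients b on mons {..<3} 4 with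
  x1,x2,x3 indexed by 0,1,2.\<close>
definition Xcoef :: "((nat \<Rightarrow> nat) \<Rightarrow> 'a::comm_ring_1) \<Rightarrow> (nat \<Rightarrow> nat) \<Rightarrow> 'a" where
  "Xcoef b m =
     (if m = (\<lambda>i. if i = 0 then 4 else 0) then 1 else 0)
   + (if m = (\<lambda>i. if i = 0 then 2 else if i = 1 then 2 else 0) then 1 else 0)
   + (if m 0 = 0 then b (\<lambda>i. m (Suc i)) else 0)"

definition CB :: "((nat \<Rightarrow> nat) \<Rightarrow> 'a::field) \<Rightarrow> (nat \<Rightarrow> 'a) set set" where
  "CB b = proj_class {..<3} ` {x \<in> nzvec {..<3}. \<forall>u<3. hpd {..<3} 4 b u x = 0}"

end

theory Submission
  imports Defs
begin

text \<open>In characteristic 2 the partial derivative of the equation of X in w vanishes identically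
  and the other partial derivatives are those of B, so the singular points of X lie over the
  points of C_B. Over such a point, normalized by x1 = 1, the equation
  w^4 + w^2 + B(x) = (w^2 + w + B(x)^(1/2))^2 has exactly two roots in w.

  The gradient of B is the cross product of x with P(x) = A x^[2], where A is the polar matrix
  of B and x^[2] the componentwise square, so C_B consists of the points with P(x) parallel to x.
  If A is invertible, rescaling identifies them with the nonzero solutions of the Frobenius-
  semilinear system z^[2] = A^-1 z. For generic B these solutions are determined by their first
  coordinate, which runs through the 8 roots of a separable additive polynomial; hence C_B has
  7 points and X has 14 singular points. The tangent cone at each of them is a smooth conic
  because, by Euler's formula in characteristic 2, the Hessian quadric of B vanishes at the point.\<close>

lemma finite_mons_le:
  assumes "finite V"
  shows "finite (mons_le V D)"
proof (rule finite_subset)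
  show "mons_le V D \<subseteq> {m. \<forall>v. (v \<in> V \<longrightarrow> m v \<in> {..D}) \<and> (v \<notin> V \<longrightarrow> m v = 0)}"
    using assms by (auto simp: mons_le_def intro: order.trans[OF member_le_sum])
  show "finite {m. \<forall>v. (v \<in> V \<longrightarrow> m v \<in> {..D}) \<and> (v \<notin> V \<longrightarrow> m v = 0)}"
    using assms by (intro finite_set_of_finite_funs) auto
qed

lemma finite_mons: "finite V \<Longrightarrow> finite (mons V d)"
  by (rule finite_subset[OF _ finite_mons_le[of V d]]) (auto simp: mons_def mons_le_def)

lemma mons_empty: "mons {} d = (if d = 0 then {\<lambda>_. 0} else {})"
  by (auto simp: mons_def)

lemma sum_mons_empty: "(\<Sum>m\<in>mons {} d. f m) = (if d = 0 then f (\<lambda>_. 0) else 0)"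
  by (simp add: mons_empty)

lemma sum_mons_insert:
  assumes a: "a \<notin> V" and V: "finite V"
  shows "(\<Sum>m\<in>mons (insert a V) d. f m) = (\<Sum>k\<le>d. \<Sum>m\<in>mons V (d-k). f (m(a:=k)))"
proof -
  have "(\<Sum>k\<le>d. \<Sum>m\<in>mons V (d-k). f (m(a:=k))) = (\<Sum>(k,m)\<in>Sigma {..d} (\<lambda>k. mons V (d-k)). f (m(a:=k)))"
    by (rule sum.Sigma) (auto simp: finite_mons V)
  also have "\<dots> = (\<Sum>m\<in>mons (insert a V) d. f m)"
  proof (rule sum.reindex_bij_witness[where i = "\<lambda>m. (m a, m(a:=0))" and j = "\<lambda>(k,m). m(a:=k)"])
    fix m assume m: "m \<in> mons (insert a V) d"
    have "sum m (insert a V) = m a + sum m V" "sum (m(a:=0)) V = sum m V"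
      using a V by (auto intro: sum.cong)
    then show "(m a, m(a := 0)) \<in> Sigma {..d} (\<lambda>k. mons V (d - k))"
      using m by (auto simp: mons_def)
  next
    fix p assume "p \<in> Sigma {..d} (\<lambda>k. mons V (d - k))"
    then obtain k m where p: "p = (k,m)" "k \<le> d" "m \<in> mons V (d-k)" by auto
    have "m a = 0" using p a by (auto simp: mons_def)
    moreover have "sum (m(a:=k)) V = sum m V" using a by (intro sum.cong) auto
    ultimately show "((case p of (k, m) \<Rightarrow> m(a := k)) a, (case p of (k, m) \<Rightarrow> m(a := k))(a := 0)) = p"
      and "(case p of (k, m) \<Rightarrow> m(a := k)) \<in> mons (insert a V) d"
      using p a V by (auto simp: mons_def)
  qed auto
  finally show ?thesis ..
qed

lemma sum_mons_shift:
  fixes g :: "(nat \<Rightarrow> nat) \<Rightarrow> 'b::comm_monoid_add"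
  shows "(\<Sum>m\<in>{m\<in>mons {..<Suc n} d. m 0 = 0}. g (\<lambda>i. m (Suc i))) = (\<Sum>m\<in>mons {..<n} d. g m)"
proof (rule sum.reindex_bij_witness[where i = "\<lambda>m i. case i of 0 \<Rightarrow> 0 | Suc j \<Rightarrow> m j"
      and j = "\<lambda>m i. m (Suc i)"])
  fix m :: "nat \<Rightarrow> nat" assume m: "m \<in> {m\<in>mons {..<Suc n} d. m 0 = 0}"
  then show "(\<lambda>i. case i of 0 \<Rightarrow> 0 | Suc j \<Rightarrow> m (Suc j)) = m"
    by (auto simp: fun_eq_iff split: nat.split)
  show "(\<lambda>i. m (Suc i)) \<in> mons {..<n} d"
    using m by (auto simp: mons_def sum.lessThan_Suc_shift simp del: sum.lessThan_Suc)
next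
  fix m :: "nat \<Rightarrow> nat" assume m: "m \<in> mons {..<n} d"
  then show "(case_nat 0 m) \<in> {m\<in>mons {..<Suc n} d. m 0 = 0}"
    by (auto simp: mons_def sum.lessThan_Suc_shift split: nat.split simp del: sum.lessThan_Suc)
qed auto

lemma heval_eq_hasse_0: "heval V d c x = hasse V d c (\<lambda>_. 0) x"
  by (simp add: heval_def hasse_def)

lemma hasse_add:
  "hasse V d (\<lambda>m. c m + c' m) \<alpha> x = hasse V d c \<alpha> x + hasse V d c' \<alpha> x"
  by (simp add: hasse_def distrib_right sum.distrib)

lemma hasse_monomial:
  assumes "finite V" "e \<in> mons V d"
  shows "hasse V d (\<lambda>m. if m = e then 1 else 0) \<alpha> x =
    (\<Prod>v\<in>V. of_nat (e v choose \<alpha> v) * x v ^ (e v - \<alpha> v))"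
  using assms by (simp add: hasse_def finite_mons if_distrib[where f = "\<lambda>a. a * _"] cong: if_cong)

text \<open>The coefficient function (\<lambda>m. if m 0 = 0 then c (\<lambda>i. m (Suc i)) else 0) is the form c in the
  variables 1, ..., n regarded as a form in the variables 0, ..., n.\<close>
lemma hasse_lift:
  "hasse {..<Suc n} d (\<lambda>m. if m 0 = 0 then c (\<lambda>i. m (Suc i)) else 0) \<alpha> x =
    (if \<alpha> 0 = 0 then hasse {..<n} d c (\<lambda>i. \<alpha> (Suc i)) (\<lambda>i. x (Suc i)) else 0)"
proof -
  let ?t = "\<lambda>m. c m * (\<Prod>v<n. of_nat (m v choose \<alpha> (Suc v)) * x (Suc v) ^ (m v - \<alpha> (Suc v)))"
  have "(if m 0 = 0 then c (\<lambda>i. m (Suc i)) else 0) *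
      (\<Prod>v<Suc n. of_nat (m v choose \<alpha> v) * x v ^ (m v - \<alpha> v)) =
      (if m 0 = 0 then (if \<alpha> 0 = 0 then 1 else 0) * ?t (\<lambda>i. m (Suc i)) else 0)" for m
    by (simp add: prod.lessThan_Suc_shift binomial_eq_0 del: prod.lessThan_Suc)
  then have "hasse {..<Suc n} d (\<lambda>m. if m 0 = 0 then c (\<lambda>i. m (Suc i)) else 0) \<alpha> x =
      (\<Sum>m\<in>{m\<in>mons {..<Suc n} d. m 0 = 0}. (if \<alpha> 0 = 0 then 1 else 0) * ?t (\<lambda>i. m (Suc i)))"
    by (simp add: hasse_def sum.inter_filter finite_mons)
  also have "\<dots> = (if \<alpha> 0 = 0 then 1 else 0) * (\<Sum>m\<in>mons {..<n} d. ?t m)"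
    using sum_mons_shift[of ?t n d] by (simp add: sum_distrib_left)
  finally show ?thesis by (simp add: hasse_def)
qed

lemma heval_homogeneous:
  assumes "finite V"
  shows "heval V d c (\<lambda>v. t * x v) = t ^ d * heval V d c x"
proof -
  have "c m * (\<Prod>v\<in>V. (t * x v) ^ m v) = t ^ d * (c m * (\<Prod>v\<in>V. x v ^ m v))"
    if "m \<in> mons V d" for m
    using that by (simp add: power_mult_distrib prod.distrib power_sum[symmetric] mons_def)
  then show ?thesis by (simp add: heval_def sum_distrib_left)
qed

lemma hasse_restrict_hyperplane:
  assumes V: "finite V" "v0 \<in> V" and \<alpha>: "\<alpha> v0 = 0" and x: "x v0 = 0"
  shows "hasse (V - {v0}) d c \<alpha> x = hasse V d c \<alpha> x"
proof -
  let ?t = "\<lambda>W m. c m * (\<Prod>v\<in>W. of_nat (m v choose \<alpha> v) * x v ^ (m v - \<alpha> v))"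
  have mons: "mons (V - {v0}) d = {m\<in>mons V d. m v0 = 0}"
    using V by (auto simp: mons_def sum.remove)
  have "?t V m = (if m v0 = 0 then ?t (V - {v0}) m else 0)" for m
    using V \<alpha> x by (simp add: prod.remove power_0_left)
  then have "hasse V d c \<alpha> x = (\<Sum>m\<in>mons V d. if m v0 = 0 then ?t (V - {v0}) m else 0)"
    by (simp add: hasse_def)
  also have "\<dots> = hasse (V - {v0}) d c \<alpha> x"
    by (simp add: hasse_def mons sum.inter_filter finite_mons V)
  finally show ?thesis ..
qed

lemma CHAR2_add_self: "CHAR('a::comm_ring_1) = 2 \<Longrightarrow> (x::'a) + x = 0"
  by (metis minus_CHAR_2 diff_self)

lemma CHAR2_numeral_even: "CHAR('a::comm_ring_1) = 2 \<Longrightarrow> (numeral (Num.Bit0 n)::'a) = 0"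
  by (simp only: numeral_Bit0 CHAR2_add_self)

lemma CHAR2_numeral_odd: "CHAR('a::comm_ring_1) = 2 \<Longrightarrow> (numeral (Num.Bit1 n)::'a) = 1"
  by (simp only: numeral_Bit1 CHAR2_add_self add_0_left)

lemma CHAR2_add_eq_0_iff: "CHAR('a::comm_ring_1) = 2 \<Longrightarrow> (x::'a) + y = 0 \<longleftrightarrow> x = y"
  by (metis minus_CHAR_2 eq_iff_diff_eq_0)

lemma CHAR2_power2_add:
  assumes "CHAR('a::comm_ring_1) = 2"
  shows "((x::'a) + y) ^ 2 = x ^ 2 + y ^ 2"
proof -
  have "(x + y) ^ 2 = x ^ 2 + y ^ 2 + (x * y + x * y)" by (simp add: power2_eq_square algebra_simps)
  then show ?thesis using CHAR2_add_self[OF assms] by simp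
qed

lemma nzvec_scale: "x \<in> nzvec V \<Longrightarrow> (t::'a::field) \<noteq> 0 \<Longrightarrow> (\<lambda>v. t * x v) \<in> nzvec V"
  by (auto simp: nzvec_def)

lemma proj_class_self: "(\<forall>v. v \<notin> V \<longrightarrow> x v = 0) \<Longrightarrow> x \<in> proj_class V x"
  unfolding proj_class_def by (auto intro!: exI[of _ 1])

lemma proj_classE:
  assumes "y \<in> proj_class V x" "\<forall>v. v \<notin> V \<longrightarrow> x v = 0"
  obtains c where "c \<noteq> 0" "y = (\<lambda>v. c * x v)"
proof -
  from assms(1) obtain c where c: "c \<noteq> 0" "\<forall>v\<in>V. y v = c * x v" "\<forall>v. v \<notin> V \<longrightarrow> y v = 0"
    unfolding proj_class_def by auto
  then have "y = (\<lambda>v. c * x v)"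
    using assms(2) by (metis mult_zero_right)
  then show thesis using c(1) that by blast
qed

lemma proj_class_scale:
  fixes x :: "'v \<Rightarrow> 'a::field"
  assumes "c \<noteq> 0"
  shows "proj_class V (\<lambda>v. c * x v) = proj_class V x"
proof -
  have "(\<exists>d. d \<noteq> 0 \<and> (\<forall>v\<in>V. y v = d * (c * x v))) \<longleftrightarrow> (\<exists>d. d \<noteq> 0 \<and> (\<forall>v\<in>V. y v = d * x v))"
    for y :: "'v \<Rightarrow> 'a"
  proof
    assume "\<exists>d. d \<noteq> 0 \<and> (\<forall>v\<in>V. y v = d * (c * x v))"
    then obtain d where "d \<noteq> 0" "\<forall>v\<in>V. y v = d * (c * x v)" by blast
    then show "\<exists>d. d \<noteq> 0 \<and> (\<forall>v\<in>V. y v = d * x v)"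
      using assms by (intro exI[of _ "d * c"]) (simp add: mult.assoc)
  next
    assume "\<exists>d. d \<noteq> 0 \<and> (\<forall>v\<in>V. y v = d * x v)"
    then obtain d where "d \<noteq> 0" "\<forall>v\<in>V. y v = d * x v" by blast
    then show "\<exists>d. d \<noteq> 0 \<and> (\<forall>v\<in>V. y v = d * (c * x v))"
      using assms by (intro exI[of _ "d / c"]) simp
  qed
  then show ?thesis by (simp add: proj_class_def)
qed

lemma bij_betw_proj_class_normalized:
  fixes S :: "('v \<Rightarrow> 'a::field) set"
  assumes out: "\<And>x. x \<in> S \<Longrightarrow> \<forall>v. v \<notin> V \<longrightarrow> x v = 0"
    and cone: "\<And>x c. x \<in> S \<Longrightarrow> c \<noteq> 0 \<Longrightarrow> (\<lambda>v. c * x v) \<in> S"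
    and nz: "\<And>x. x \<in> S \<Longrightarrow> x k \<noteq> 0"
  shows "bij_betw (proj_class V) {x\<in>S. x k = 1} (proj_class V ` S)"
proof (rule bij_betw_imageI)
  show "inj_on (proj_class V) {x\<in>S. x k = 1}"
  proof (rule inj_onI)
    fix x y assume x: "x \<in> {x\<in>S. x k = 1}" and y: "y \<in> {x\<in>S. x k = 1}"
      and e: "proj_class V x = proj_class V y"
    have "y \<in> proj_class V x" unfolding e using out y by (intro proj_class_self) simp
    then obtain c where c: "y = (\<lambda>v. c * x v)" using out x by (auto elim: proj_classE)
    then have "c = 1" using x y by simp
    with c show "x = y" by simp
  qed
  have "P \<in> proj_class V ` {x\<in>S. x k = 1}" if "P \<in> proj_class V ` S" for P
  proof -
    obtain x where x: "x \<in> S" "P = proj_class V x" using \<open>P \<in> proj_class V ` S\<close> by auto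
    let ?x = "\<lambda>v. inverse (x k) * x v"
    have "?x \<in> {x\<in>S. x k = 1}" using cone[OF x(1)] nz[OF x(1)] by simp
    moreover have "proj_class V ?x = P" using x nz[OF x(1)] by (simp add: proj_class_scale)
    ultimately show ?thesis by (intro image_eqI[where x = ?x]) simp_all
  qed
  then show "proj_class V ` {x\<in>S. x k = 1} = proj_class V ` S" by blast
qed

lemma poly_pderiv_double_root:
  fixes p :: "'a::idom poly"
  assumes "[:-a, 1:] ^ 2 dvd p"
  shows "poly (pderiv p) a = 0"
proof -
  from assms obtain q where "p = [:-a, 1:] ^ 2 * q" by (rule dvdE)
  then have "p = [:-a, 1:] * ([:-a, 1:] * q)" by (simp only: power2_eq_square mult.assoc)
  moreover have "poly (pderiv ([:-a, 1:] * ([:-a, 1:] * q))) a = 0"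
    unfolding pderiv_mult poly_add poly_mult by simp
  ultimately show ?thesis by (simp only:)
qed

lemma card_roots_separable:
  fixes p :: "'a::alg_closed_field poly"
  assumes p: "p \<noteq> 0" and sep: "\<And>x. poly p x = 0 \<Longrightarrow> poly (pderiv p) x \<noteq> 0"
  shows "card {x. poly p x = 0} = degree p"
proof -
  obtain A where A: "size A = degree p" "p = smult (lead_coeff p) (\<Prod>x\<in>#A. [:-x, 1:])"
    using alg_closed_imp_factorization[OF p] by blast
  have "proots (\<Prod>x\<in>#A. [:-x, 1:]) = A"
  proof (induction A)
    case (add x A)
    have "(\<Prod>y\<in>#A. [:-y, 1:]) \<noteq> 0" by (induction A) (auto simp del: mult_pCons_left)
    then show ?case using add.IH by (simp add: proots_mult del: mult_pCons_left)
  qed simp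
  then have "proots p = A" using p by (subst A(2)) simp
  then have roots: "{x. poly p x = 0} = set_mset A" and count: "\<And>x. count A x = order x p"
    using p by auto
  have "order x p = 1" if "x \<in># A" for x
  proof -
    have "poly p x = 0" using that roots by blast
    moreover have "\<not> [:-x, 1:] ^ 2 dvd p"
      using sep[OF calculation] poly_pderiv_double_root by blast
    ultimately have "0 < order x p" "\<not> [:-x, 1:] ^ 2 dvd p"
      using p by (auto simp: order_root)
    then show ?thesis using p by (simp add: order_divides)
  qed
  then have "card (set_mset A) = (\<Sum>x\<in>set_mset A. count A x)" by (simp add: count)
  also have "\<dots> = size A" by (simp add: size_multiset_overloaded_eq)
  finally show ?thesis using A(1) roots by simp
qed

text \<open>In characteristic 2 the octic below is an additive polynomial whose derivative is the
  nonzero constant a0, so it is separable.\<close>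
lemma card_roots_additive_octic:
  fixes a0 a1 a2 :: "'a::alg_closed_field"
  assumes ch: "CHAR('a) = 2" and a0: "a0 \<noteq> 0"
  shows "card {t. t^8 + a2 * t^4 + a1 * t^2 + a0 * t = 0} = 8"
proof -
  define p where "p = [:0, a0, a1, 0, a2, 0, 0, 0, 1:]"
  have "poly p t = t^8 + a2 * t^4 + a1 * t^2 + a0 * t" for t
    by (simp add: p_def algebra_simps eval_nat_numeral)
  moreover have "poly (pderiv p) t = a0" for t
    by (simp add: p_def pderiv_pCons CHAR2_numeral_even[OF ch])
  ultimately show ?thesis
    using card_roots_separable[of p] a0 by (simp add: p_def)
qed

lemma card_roots_quartic_CHAR2:
  fixes c :: "'a::alg_closed_field"
  assumes ch: "CHAR('a) = 2"
  shows "card {w. w^4 + w^2 + c = 0} = 2"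
proof -
  obtain s where s: "s^2 = c" using nth_root_exists[of 2 c] by auto
  obtain r where r: "poly [:s, 1, 1:] r = 0"
    using alg_closed_imp_poly_has_root[of "[:s, 1, 1:]"] by auto
  have "w^4 + w^2 + c = (w^2 + w + s)^2" for w
    using s by (simp add: CHAR2_power2_add[OF ch] power_mult[symmetric])
  moreover have "w^2 + w + s = (w + r) * (w + r + 1)" for w
  proof -
    have "s = r^2 + r" using r CHAR2_add_eq_0_iff[OF ch, of s "r^2 + r"] by (simp add: algebra_simps power2_eq_square)
    then show ?thesis by (simp add: power2_eq_square algebra_simps CHAR2_numeral_even[OF ch])
  qed
  ultimately have "{w. w^4 + w^2 + c = 0} = {r, r + 1}"
    by (auto simp: CHAR2_add_eq_0_iff[OF ch] add.assoc)
  then show ?thesis by simp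
qed

definition poly_fun :: "'v set \<Rightarrow> (('v \<Rightarrow> 'a::comm_ring_1) \<Rightarrow> 'a) \<Rightarrow> bool" where
  "poly_fun V f \<longleftrightarrow> (\<exists>D c. \<forall>x. f x = peval V D c x)"

lemma peval_raise_degree:
  assumes "finite V" "D \<le> D'"
  shows "peval V D c x = peval V D' (\<lambda>m. if m \<in> mons_le V D then c m else 0) x"
proof -
  have "mons_le V D \<subseteq> mons_le V D'" using assms(2) by (auto simp: mons_le_def)
  then show ?thesis unfolding peval_def
    by (intro sum.mono_neutral_cong_left finite_mons_le assms(1)) auto
qed

lemma poly_fun_const: "finite V \<Longrightarrow> poly_fun V (\<lambda>_. k)"
proof -
  assume V: "finite V"
  have "mons_le V 0 = {\<lambda>_. 0}"
    using V by (auto simp: mons_le_def fun_eq_iff)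
  then have "k = peval V 0 (\<lambda>_. k) x" for x by (simp add: peval_def)
  then show ?thesis unfolding poly_fun_def by blast
qed

lemma poly_fun_var:
  assumes V: "finite V" and v: "v \<in> V"
  shows "poly_fun V (\<lambda>x :: 'v \<Rightarrow> 'a::comm_ring_1. x v)"
proof -
  define e where "e = (\<lambda>u. if u = v then 1 else (0::nat))"
  have e: "e \<in> mons_le V 1"
    using V v by (auto simp: mons_le_def e_def)
  have "peval V 1 (\<lambda>m. if m = e then 1 else 0) x = x v" for x :: "'v \<Rightarrow> 'a"
  proof -
    have "peval V 1 (\<lambda>m. if m = e then 1 else 0) x = (\<Prod>u\<in>V. x u ^ e u)"
      using e finite_mons_le[OF V]
      by (simp add: peval_def if_distrib[where f = "\<lambda>a::'a. a * _"] cong: if_cong)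
    also have "\<dots> = x v"
      using V v by (simp add: e_def if_distrib[where f = "\<lambda>n. x _ ^ n"] cong: if_cong)
    finally show ?thesis .
  qed
  then show ?thesis unfolding poly_fun_def by (metis (no_types))
qed

lemma poly_fun_add:
  assumes V: "finite V" and "poly_fun V f" "poly_fun V g"
  shows "poly_fun V (\<lambda>x. f x + g x)"
proof -
  obtain D1 c1 D2 c2 where f: "\<And>x. f x = peval V D1 c1 x" and g: "\<And>x. g x = peval V D2 c2 x"
    using assms(2,3) unfolding poly_fun_def by blast
  let ?D = "max D1 D2"
  have "f x + g x = peval V ?D (\<lambda>m. (if m \<in> mons_le V D1 then c1 m else 0) +
      (if m \<in> mons_le V D2 then c2 m else 0)) x" for x
  proof -
    have "f x = peval V ?D (\<lambda>m. if m \<in> mons_le V D1 then c1 m else 0) x"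
      unfolding f by (rule peval_raise_degree[OF V]) simp
    moreover have "g x = peval V ?D (\<lambda>m. if m \<in> mons_le V D2 then c2 m else 0) x"
      unfolding g by (rule peval_raise_degree[OF V]) simp
    ultimately show ?thesis by (simp add: peval_def distrib_right sum.distrib)
  qed
  then show ?thesis unfolding poly_fun_def by blast
qed

lemma poly_fun_mult:
  assumes V: "finite V" and "poly_fun V f" "poly_fun V g"
  shows "poly_fun V (\<lambda>x. f x * g x)"
proof -
  obtain D1 c1 D2 c2 where f: "\<And>x. f x = peval V D1 c1 x" and g: "\<And>x. g x = peval V D2 c2 x"
    using assms(2,3) unfolding poly_fun_def by blast
  define P where "P = mons_le V D1 \<times> mons_le V D2"
  let ?sum = "\<lambda>p::('v \<Rightarrow> nat) \<times> ('v \<Rightarrow> nat). \<lambda>u. fst p u + snd p u"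
  define c where "c = (\<lambda>m. \<Sum>p\<in>{p\<in>P. ?sum p = m}. c1 (fst p) * c2 (snd p))"
  have finP: "finite P" using V by (simp add: P_def finite_mons_le)
  have sum_P: "?sum ` P \<subseteq> mons_le V (D1 + D2)"
    by (auto simp: P_def mons_le_def sum.distrib add_mono)
  have "f x * g x = (\<Sum>p\<in>P. c1 (fst p) * c2 (snd p) * (\<Prod>u\<in>V. x u ^ ?sum p u))" for x
    unfolding f g peval_def P_def sum_product sum.cartesian_product
    by (intro sum.cong refl) (auto simp: power_add prod.distrib algebra_simps)
  also have "\<dots> x = peval V (D1 + D2) c x" for x
    unfolding sum.group[OF finP finite_mons_le[OF V] sum_P, symmetric] peval_def c_def sum_distrib_right
    by (intro sum.cong refl) auto
  finally show ?thesis unfolding poly_fun_def by blast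
qed

lemma poly_fun_diff:
  assumes V: "finite V" and "poly_fun V f" "poly_fun V g"
  shows "poly_fun V (\<lambda>x. f x - g x)"
  using poly_fun_add[OF V assms(2) poly_fun_mult[OF V poly_fun_const[OF V, of "-1"] assms(3)]] by simp

lemma poly_fun_if: "(P \<Longrightarrow> poly_fun V f) \<Longrightarrow> (\<not> P \<Longrightarrow> poly_fun V g) \<Longrightarrow>
    poly_fun V (\<lambda>x. if P then f x else g x)"
  by (cases P) simp_all

section \<open>Three-dimensional linear algebra\<close>

text \<open>Vectors are functions on nat of which only the entries 0, 1, 2 matter, and a 3 by 3 matrix
  is the function mapping i to its i-th row.\<close>

definition dot3 :: "(nat \<Rightarrow> 'a::comm_ring_1) \<Rightarrow> (nat \<Rightarrow> 'a) \<Rightarrow> 'a" where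
  "dot3 p z = p 0 * z 0 + p 1 * z 1 + p 2 * z 2"

definition det3 :: "(nat \<Rightarrow> 'a::comm_ring_1) \<Rightarrow> (nat \<Rightarrow> 'a) \<Rightarrow> (nat \<Rightarrow> 'a) \<Rightarrow> 'a" where
  "det3 p q r = p 0 * (q 1 * r 2 - q 2 * r 1) - p 1 * (q 0 * r 2 - q 2 * r 0) + p 2 * (q 0 * r 1 - q 1 * r 0)"

definition cross3 :: "(nat \<Rightarrow> 'a::comm_ring_1) \<Rightarrow> (nat \<Rightarrow> 'a) \<Rightarrow> nat \<Rightarrow> 'a" where
  "cross3 p q = (\<lambda>j. if j = 0 then p 1 * q 2 - p 2 * q 1 else if j = 1 then p 2 * q 0 - p 0 * q 2
     else p 0 * q 1 - p 1 * q 0)"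

definition mat_vec :: "(nat \<Rightarrow> nat \<Rightarrow> 'a::comm_ring_1) \<Rightarrow> (nat \<Rightarrow> 'a) \<Rightarrow> nat \<Rightarrow> 'a" where
  "mat_vec M z = (\<lambda>i. dot3 (M i) z)"

definition adj3 :: "(nat \<Rightarrow> nat \<Rightarrow> 'a::comm_ring_1) \<Rightarrow> nat \<Rightarrow> nat \<Rightarrow> 'a" where
  "adj3 M i = (if i = 0 then cross3 (\<lambda>j. M j 1) (\<lambda>j. M j 2)
     else if i = 1 then cross3 (\<lambda>j. M j 2) (\<lambda>j. M j 0) else cross3 (\<lambda>j. M j 0) (\<lambda>j. M j 1))"

definition cramer3 :: "(nat \<Rightarrow> 'a::field) \<Rightarrow> (nat \<Rightarrow> 'a) \<Rightarrow> (nat \<Rightarrow> 'a) \<Rightarrow> 'a \<Rightarrow> 'a \<Rightarrow> 'a \<Rightarrow> nat \<Rightarrow> 'a" where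
  "cramer3 p q r a b c = (\<lambda>i. if i < 3 then det3 (p(i := a)) (q(i := b)) (r(i := c)) / det3 p q r else 0)"

lemma all_less_3: "(\<forall>i<3. P i) \<longleftrightarrow> P 0 \<and> P 1 \<and> P (2::nat)"
  by (auto simp: less_Suc_eq numeral_eq_Suc)

lemma dot3_cramer3:
  fixes p q r :: "nat \<Rightarrow> 'a::field"
  assumes "det3 p q r \<noteq> 0"
  shows "dot3 p (cramer3 p q r a b c) = a" "dot3 q (cramer3 p q r a b c) = b"
    "dot3 r (cramer3 p q r a b c) = c" "\<And>i. i \<ge> 3 \<Longrightarrow> cramer3 p q r a b c i = 0"
proof -
  let ?N = "\<lambda>i. det3 (p(i := a)) (q(i := b)) (r(i := c))"
  have "dot3 u (cramer3 p q r a b c) = dot3 u ?N / det3 p q r" for u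
    by (simp add: cramer3_def dot3_def add_divide_distrib)
  moreover have "dot3 p ?N = a * det3 p q r" "dot3 q ?N = b * det3 p q r" "dot3 r ?N = c * det3 p q r"
    by (simp_all add: dot3_def det3_def algebra_simps)
  ultimately show "dot3 p (cramer3 p q r a b c) = a" "dot3 q (cramer3 p q r a b c) = b"
    "dot3 r (cramer3 p q r a b c) = c" using assms by simp_all
qed (simp add: cramer3_def)

lemma det3_dot3_cancel:
  fixes p q r :: "nat \<Rightarrow> 'a::field"
  assumes "det3 p q r \<noteq> 0" "dot3 p z = dot3 p z'" "dot3 q z = dot3 q z'" "dot3 r z = dot3 r z'"
  shows "z 0 = z' 0" "z 1 = z' 1" "z 2 = z' 2"
proof -
  define w where "w = (\<lambda>i. z i - z' i)"
  have "dot3 p w = 0" "dot3 q w = 0" "dot3 r w = 0"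
    using assms(2-4) by (simp_all add: dot3_def w_def algebra_simps)
  then have "det3 p q r * w 0 = 0" "det3 p q r * w 1 = 0" "det3 p q r * w 2 = 0"
    unfolding dot3_def det3_def by algebra+
  then show "z 0 = z' 0" "z 1 = z' 1" "z 2 = z' 2" using assms(1) by (simp_all add: w_def)
qed

lemma det3_nonzero_span:
  fixes p q r s :: "nat \<Rightarrow> 'a::field"
  assumes "det3 p q r \<noteq> 0"
  obtains a0 a1 a2 where "\<forall>j<3. s j = a0 * p j + a1 * q j + a2 * r j"
proof -
  let ?col = "\<lambda>j i. if i = 0 then p j else if i = 1 then q j else r j"
  let ?a = "cramer3 (?col 0) (?col 1) (?col 2) (s 0) (s 1) (s 2)"
  have "det3 (?col 0) (?col 1) (?col 2) \<noteq> 0" using assms by (simp add: det3_def algebra_simps)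
  from dot3_cramer3[OF this, where a = "s 0" and b = "s 1" and c = "s 2"] have "\<forall>j<3. s j = ?a 0 * p j + ?a 1 * q j + ?a 2 * r j"
    unfolding all_less_3 by (simp add: dot3_def mult.commute)
  then show thesis by (rule that)
qed

lemma det3_lincomb_first:
  fixes p q r s :: "nat \<Rightarrow> 'a::comm_ring_1"
  assumes "\<forall>j<3. s j = a0 * p j + a1 * q j + a2 * r j"
  shows "det3 s q r = a0 * det3 p q r"
  using assms unfolding all_less_3 det3_def by (simp add: algebra_simps)

lemma det3_scale: "det3 (\<lambda>j. p j * a) (\<lambda>j. q j * b) (\<lambda>j. r j * c) = det3 p q r * (a * b * c)"
  by (simp add: det3_def algebra_simps)

lemma less_3_cases: "(i::nat) < 3 \<Longrightarrow> i = 0 \<or> i = 1 \<or> i = 2"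
  by auto

lemma adj3_mult: "i < 3 \<Longrightarrow> mat_vec (adj3 M) (mat_vec M w) i = det3 (M 0) (M 1) (M 2) * w i"
  by (drule less_3_cases, elim disjE)
    (simp_all add: mat_vec_def adj3_def cross3_def det3_def dot3_def algebra_simps)

lemma mult_adj3: "i < 3 \<Longrightarrow> mat_vec M (mat_vec (adj3 M) w) i = det3 (M 0) (M 1) (M 2) * w i"
  by (drule less_3_cases, elim disjE)
    (simp_all add: mat_vec_def adj3_def cross3_def det3_def dot3_def algebra_simps)

lemma cross3_eq_0_imp_parallel:
  fixes x v :: "nat \<Rightarrow> 'a::field"
  assumes "\<forall>j<3. cross3 x v j = 0" "i < 3" "x i \<noteq> 0"
  shows "\<exists>\<mu>. \<forall>j<3. v j = \<mu> * x j"
  using assms unfolding all_less_3 cross3_def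
  by (auto simp: less_Suc_eq numeral_eq_Suc intro!: exI[of _ "v i / x i"] simp: field_simps)

lemma mat_vec_cong: "z 0 = z' 0 \<Longrightarrow> z 1 = z' 1 \<Longrightarrow> z 2 = z' 2 \<Longrightarrow> mat_vec M z = mat_vec M z'"
  by (simp add: mat_vec_def dot3_def)

lemma cross3_parallel: "cross3 x (\<lambda>i. \<mu> * x i) j = 0"
  by (simp add: cross3_def algebra_simps)

lemma cross3_antisym: "cross3 x v j = - cross3 v x j"
  by (simp add: cross3_def)

lemma cross3_eq_0_off_imp_0:
  fixes a b :: "nat \<Rightarrow> 'a::field"
  assumes "k0 < 3" "a k0 = 0" "b k0 \<noteq> 0" "\<forall>k<3. k \<noteq> k0 \<longrightarrow> cross3 a b k = 0"
  shows "\<forall>i<3. a i = 0"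
  using less_3_cases[OF assms(1)] assms(2-4) unfolding all_less_3
  by (elim disjE) (auto simp: cross3_def)

section \<open>Frobenius-semilinear systems\<close>

definition sq_vec :: "(nat \<Rightarrow> 'a::comm_ring_1) \<Rightarrow> nat \<Rightarrow> 'a" where
  "sq_vec z = (\<lambda>i. z i ^ 2)"

definition unit0 :: "nat \<Rightarrow> 'a::comm_ring_1" where
  "unit0 = (\<lambda>j. if j = 0 then 1 else 0)"

text \<open>On the solutions z of the system z^2 = C z (componentwise square), the square of the linear
  form with coefficients r is the linear form with coefficients frob_dual C r.\<close>
definition frob_dual :: "(nat \<Rightarrow> nat \<Rightarrow> 'a::comm_ring_1) \<Rightarrow> (nat \<Rightarrow> 'a) \<Rightarrow> nat \<Rightarrow> 'a" where
  "frob_dual C r = (\<lambda>j. dot3 (sq_vec r) (\<lambda>i. C i j))"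

definition frob_iterate :: "(nat \<Rightarrow> nat \<Rightarrow> 'a::comm_ring_1) \<Rightarrow> nat \<Rightarrow> nat \<Rightarrow> 'a" where
  "frob_iterate C k = (frob_dual C ^^ k) (C 0)"

definition frob_solutions :: "(nat \<Rightarrow> nat \<Rightarrow> 'a::comm_ring_1) \<Rightarrow> (nat \<Rightarrow> 'a) set" where
  "frob_solutions C = {z. (\<forall>i\<ge>3. z i = 0) \<and> (\<forall>i<3. sq_vec z i = mat_vec C z i)}"

lemma dot3_unit0: "dot3 unit0 z = z 0"
  by (simp add: dot3_def unit0_def)

lemma frob_dual_unit0: "frob_dual C unit0 = C 0"
  by (simp add: frob_dual_def dot3_def sq_vec_def unit0_def)

lemma frob_dual_scale:
  "frob_dual (\<lambda>i j. C i j * s) (\<lambda>j. r j * c) = (\<lambda>j. frob_dual C r j * (c ^ 2 * s))"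
  by (simp add: frob_dual_def dot3_def sq_vec_def algebra_simps)

lemma frob_iterate_scale:
  "frob_iterate (\<lambda>i j. C i j * s) k = (\<lambda>j. frob_iterate C k j * s ^ (2 ^ Suc k - 1))"
proof (induction k)
  case (Suc k)
  have "(1::nat) \<le> 2 ^ k" by simp
  then have "2 * (2 ^ Suc k - 1) + 1 = (2::nat) ^ Suc (Suc k) - 1" by (simp only: power_Suc)
  then have exp: "(s ^ (2 ^ Suc k - 1)) ^ 2 * s = s ^ (2 ^ Suc (Suc k) - 1)"
    by (metis power_Suc2 power_mult mult.commute Suc_eq_plus1)
  have "frob_iterate (\<lambda>i j. C i j * s) (Suc k) = frob_dual (\<lambda>i j. C i j * s) (frob_iterate (\<lambda>i j. C i j * s) k)"
    by (simp add: frob_iterate_def)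
  also have "\<dots> = (\<lambda>j. frob_iterate C (Suc k) j * ((s ^ (2 ^ Suc k - 1)) ^ 2 * s))"
    by (simp only: Suc.IH frob_dual_scale) (simp add: frob_iterate_def)
  finally show ?case by (simp only: exp)
qed (simp add: frob_iterate_def)

lemma power2_dot3_CHAR2:
  assumes "CHAR('a::comm_ring_1) = 2"
  shows "(dot3 r z :: 'a) ^ 2 = dot3 (sq_vec r) (sq_vec z)"
  by (simp add: dot3_def sq_vec_def CHAR2_power2_add[OF assms] power_mult_distrib)

lemma det3_sq_vec_CHAR2:
  assumes "CHAR('a::comm_ring_1) = 2"
  shows "det3 (sq_vec p) (sq_vec q) (sq_vec r) = (det3 p q r :: 'a) ^ 2"
  by (simp add: det3_def sq_vec_def minus_CHAR_2[OF assms] CHAR2_power2_add[OF assms] power_mult_distrib)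

lemma dot3_sq_vec_mat_vec: "dot3 (sq_vec r) (mat_vec C z) = dot3 (frob_dual C r) z"
  by (simp add: dot3_def sq_vec_def mat_vec_def frob_dual_def algebra_simps)

lemma dot3_frob_dual:
  assumes "CHAR('a::comm_ring_1) = 2" "z \<in> frob_solutions C"
  shows "dot3 (frob_dual C r) z = (dot3 r z :: 'a) ^ 2"
proof -
  have "sq_vec z 0 = mat_vec C z 0" "sq_vec z 1 = mat_vec C z 1" "sq_vec z 2 = mat_vec C z 2"
    using assms(2) by (simp_all add: frob_solutions_def)
  then have "dot3 (sq_vec r) (sq_vec z) = dot3 (sq_vec r) (mat_vec C z)"
    unfolding dot3_def by (simp only:)
  then show ?thesis by (simp add: power2_dot3_CHAR2[OF assms(1)] dot3_sq_vec_mat_vec)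
qed

lemma zero_in_frob_solutions: "(\<lambda>_. 0) \<in> frob_solutions C"
  by (simp add: frob_solutions_def sq_vec_def mat_vec_def dot3_def)

text \<open>Under two nondegeneracy conditions the solutions are determined by their first entry, which
  runs through the roots of an additive octic; so there are exactly 8 of them.\<close>
context
  fixes C :: "nat \<Rightarrow> nat \<Rightarrow> 'a::alg_closed_field"
  assumes ch: "CHAR('a) = 2"
    and indep: "det3 unit0 (frob_iterate C 0) (frob_iterate C 1) \<noteq> 0"
    and indep': "det3 (frob_iterate C 2) (frob_iterate C 0) (frob_iterate C 1) \<noteq> 0"
begin

private abbreviation "r1 \<equiv> frob_iterate C 0"
private abbreviation "r2 \<equiv> frob_iterate C 1"
private abbreviation "r3 \<equiv> frob_iterate C 2"

private lemma frob_iterate_simps: "r1 = C 0" "r2 = frob_dual C r1" "r3 = frob_dual C r2"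
  by (simp_all add: frob_iterate_def numeral_2_eq_2)

private lemma dot3_iterates:
  assumes "z \<in> frob_solutions C"
  shows "dot3 r1 z = z 0 ^ 2" "dot3 r2 z = z 0 ^ 4" "dot3 r3 z = z 0 ^ 8"
  using dot3_frob_dual[OF ch assms, of unit0] dot3_frob_dual[OF ch assms, of r1]
    dot3_frob_dual[OF ch assms, of r2]
  by (simp_all only: frob_iterate_simps) (simp_all add: frob_dual_unit0 dot3_unit0 power_mult[symmetric])

private lemma frob_solutions_eq:
  assumes "z \<in> frob_solutions C" "z' \<in> frob_solutions C" "z 0 = z' 0"
  shows "z = z'"
proof
  fix i
  show "z i = z' i"
  proof (cases "i < 3")
    case True
    then show ?thesis
      using det3_dot3_cancel[OF indep, of z z'] dot3_iterates[OF assms(1)] dot3_iterates[OF assms(2)]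
        assms(3) by (auto simp: dot3_unit0 dest: less_3_cases)
  qed (use assms in \<open>simp add: frob_solutions_def\<close>)
qed

lemma frob_solutions_first_eq_0: "z \<in> frob_solutions C \<Longrightarrow> z 0 = 0 \<Longrightarrow> z = (\<lambda>_. 0)"
  using frob_solutions_eq[OF _ zero_in_frob_solutions] by simp

lemma card_frob_solutions: "card (frob_solutions C) = 8"
proof -
  obtain a0 a1 a2 where r3: "\<forall>j<3. r3 j = a0 * unit0 j + a1 * r1 j + a2 * r2 j"
    using det3_nonzero_span[OF indep] by blast
  have a0: "a0 \<noteq> 0" using det3_lincomb_first[OF r3] indep' by auto
  have dot3_r3: "dot3 r3 z = a0 * z 0 + a1 * dot3 r1 z + a2 * dot3 r2 z" for z
    using r3 unfolding all_less_3 by (simp add: dot3_def unit0_def algebra_simps)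
  define R where "R = {t. t^8 + a2 * t^4 + a1 * t^2 + a0 * t = 0}"
  have octic: "t \<in> R \<longleftrightarrow> t^8 = a0 * t + a1 * t^2 + a2 * t^4" for t
    unfolding R_def by (subst CHAR2_add_eq_0_iff[OF ch, symmetric]) (simp add: algebra_simps)
  have "(\<lambda>z. z 0) ` frob_solutions C = R"
  proof
    show "(\<lambda>z. z 0) ` frob_solutions C \<subseteq> R"
      using dot3_iterates dot3_r3 by (auto simp: octic)
    show "R \<subseteq> (\<lambda>z. z 0) ` frob_solutions C"
    proof
      fix t assume t: "t \<in> R"
      define z where "z = cramer3 unit0 r1 r2 t (t^2) (t^4)"
      have z: "dot3 unit0 z = t" "dot3 r1 z = t^2" "dot3 r2 z = t^4" "\<And>i. i \<ge> 3 \<Longrightarrow> z i = 0"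
        unfolding z_def using dot3_cramer3[OF indep] by blast+
      have "dot3 r3 z = t^8" using t z by (simp add: dot3_r3 octic dot3_unit0)
      then have "dot3 (sq_vec r) (sq_vec z) = dot3 (sq_vec r) (mat_vec C z)" if "r \<in> {unit0, r1, r2}" for r
        using that z unfolding frob_iterate_simps(2,3)
        by (auto simp: dot3_sq_vec_mat_vec power2_dot3_CHAR2[OF ch, symmetric] frob_dual_unit0
            frob_iterate_simps(1) power_mult[symmetric])
      moreover have "det3 (sq_vec unit0) (sq_vec r1) (sq_vec r2) \<noteq> 0"
        using indep by (simp add: det3_sq_vec_CHAR2[OF ch])
      ultimately have "z \<in> frob_solutions C"
        using det3_dot3_cancel[of "sq_vec unit0" "sq_vec r1" "sq_vec r2" "sq_vec z" "mat_vec C z"] z(4)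
        by (auto simp: frob_solutions_def all_less_3)
      moreover have "z 0 = t" using z(1) by (simp add: dot3_unit0)
      ultimately show "t \<in> (\<lambda>z. z 0) ` frob_solutions C" by blast
    qed
  qed
  moreover have "inj_on (\<lambda>z. z 0) (frob_solutions C)"
    using frob_solutions_eq by (auto intro: inj_onI)
  ultimately have "card (frob_solutions C) = card R" by (metis card_image)
  also have "\<dots> = 8" unfolding R_def by (rule card_roots_additive_octic[OF ch a0])
  finally show ?thesis .
qed

end

section \<open>Quartic forms in three variables in characteristic 2\<close>

definition coeff3 :: "((nat \<Rightarrow> nat) \<Rightarrow> 'a) \<Rightarrow> nat \<Rightarrow> nat \<Rightarrow> nat \<Rightarrow> 'a" where
  "coeff3 b i j k = b ((\<lambda>_. 0)(2 := k, 1 := j, 0 := i))"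

text \<open>Row i lists the coefficients of the monomials of odd degree in both variables other than i:
  in characteristic 2 these are the only monomials contributing to the gradient.\<close>
definition polar_mat :: "((nat \<Rightarrow> nat) \<Rightarrow> 'a::comm_ring_1) \<Rightarrow> nat \<Rightarrow> nat \<Rightarrow> 'a" where
  "polar_mat b i j =
    (if i = 0 then (if j = 0 then coeff3 b 2 1 1 else if j = 1 then coeff3 b 0 3 1 else coeff3 b 0 1 3)
     else if i = 1 then (if j = 0 then coeff3 b 3 0 1 else if j = 1 then coeff3 b 1 2 1 else coeff3 b 1 0 3)
     else (if j = 0 then coeff3 b 3 1 0 else if j = 1 then coeff3 b 1 3 0 else coeff3 b 1 1 2))"

definition polar :: "((nat \<Rightarrow> nat) \<Rightarrow> 'a::comm_ring_1) \<Rightarrow> (nat \<Rightarrow> 'a) \<Rightarrow> nat \<Rightarrow> 'a" where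
  "polar b x = mat_vec (polar_mat b) (sq_vec x)"

lemma lessThan_3: "{..<3::nat} = {0, 1, 2}"
  by auto

lemmas expand_mons = sum_mons_insert sum_mons_empty numeral_eq_Suc atMost_Suc

lemma polar_eq:
  "polar b x 0 = coeff3 b 2 1 1 * x 0 ^ 2 + coeff3 b 0 3 1 * x 1 ^ 2 + coeff3 b 0 1 3 * x 2 ^ 2"
  "polar b x 1 = coeff3 b 3 0 1 * x 0 ^ 2 + coeff3 b 1 2 1 * x 1 ^ 2 + coeff3 b 1 0 3 * x 2 ^ 2"
  "polar b x 2 = coeff3 b 3 1 0 * x 0 ^ 2 + coeff3 b 1 3 0 * x 1 ^ 2 + coeff3 b 1 1 2 * x 2 ^ 2"
  by (simp_all add: polar_def polar_mat_def mat_vec_def dot3_def sq_vec_def)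

lemma polar_scale: "polar b (\<lambda>v. t * x v) j = t ^ 2 * polar b x j"
  by (simp add: polar_def mat_vec_def dot3_def sq_vec_def algebra_simps)

lemma cross3_polar_scale:
  "cross3 (\<lambda>v. t * x v) (polar b (\<lambda>v. t * x v)) k = t ^ 3 * cross3 x (polar b x) k"
  by (simp add: cross3_def polar_scale algebra_simps power2_eq_square power3_eq_cube)

lemma hasse_quartic_order1_CHAR2:
  fixes b :: "(nat \<Rightarrow> nat) \<Rightarrow> 'a::comm_ring_1"
  assumes ch: "CHAR('a) = 2" and k: "k < 3"
    and \<alpha>: "\<alpha> 0 = of_bool (k = 0)" "\<alpha> 1 = of_bool (k = 1)" "\<alpha> 2 = of_bool (k = 2)"
  shows "hasse {..<3} 4 b \<alpha> x = cross3 x (polar b x) k"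
  using less_3_cases[OF k] \<alpha> unfolding hasse_def lessThan_3 cross3_def polar_eq coeff3_def minus_CHAR_2[OF ch]
  by (elim disjE) (simp_all add: expand_mons CHAR2_numeral_even[OF ch] CHAR2_numeral_odd[OF ch] algebra_simps)

lemma hpd_quartic_CHAR2:
  fixes b :: "(nat \<Rightarrow> nat) \<Rightarrow> 'a::comm_ring_1"
  assumes "CHAR('a) = 2" "k < 3"
  shows "hpd {..<3} 4 b k x = cross3 x (polar b x) k"
  unfolding hpd_def by (rule hasse_quartic_order1_CHAR2[OF assms]) auto

text \<open>The coefficient of u^alpha in the Hessian quadric of the form at x is the Hasse
  derivative of order alpha at x.\<close>
definition hessian_coeff :: "((nat \<Rightarrow> nat) \<Rightarrow> 'a::comm_ring_1) \<Rightarrow> (nat \<Rightarrow> 'a) \<Rightarrow> (nat \<Rightarrow> nat) \<Rightarrow> 'a" where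
  "hessian_coeff b x \<alpha> = hasse {..<3} 4 b \<alpha> x"

lemma hessian_coeff_mixed_CHAR2:
  fixes b :: "(nat \<Rightarrow> nat) \<Rightarrow> 'a::comm_ring_1"
  assumes ch: "CHAR('a) = 2"
  shows "\<alpha> 0 = 0 \<Longrightarrow> \<alpha> 1 = 1 \<Longrightarrow> \<alpha> 2 = 1 \<Longrightarrow> hessian_coeff b x \<alpha> = polar b x 0"
    and "\<alpha> 0 = 1 \<Longrightarrow> \<alpha> 1 = 0 \<Longrightarrow> \<alpha> 2 = 1 \<Longrightarrow> hessian_coeff b x \<alpha> = polar b x 1"
    and "\<alpha> 0 = 1 \<Longrightarrow> \<alpha> 1 = 1 \<Longrightarrow> \<alpha> 2 = 0 \<Longrightarrow> hessian_coeff b x \<alpha> = polar b x 2"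
  unfolding hessian_coeff_def hasse_def lessThan_3 polar_eq coeff3_def
  by (simp_all add: expand_mons CHAR2_numeral_even[OF ch] CHAR2_numeral_odd[OF ch])

lemma hpd_hessian_CHAR2:
  fixes b :: "(nat \<Rightarrow> nat) \<Rightarrow> 'a::comm_ring_1"
  assumes ch: "CHAR('a) = 2" and k: "k < 3"
  shows "hpd {..<3} 2 (hessian_coeff b x) k u = cross3 u (polar b x) k"
  using less_3_cases[OF k] unfolding hpd_def hasse_def lessThan_3 cross3_def minus_CHAR_2[OF ch]
  by (elim disjE) (simp_all add: expand_mons hessian_coeff_mixed_CHAR2[OF ch] CHAR2_numeral_even[OF ch] algebra_simps)

text \<open>Euler's formula for the second Hasse derivatives of a quartic: their sum, weighted by
  the corresponding monomials, is binomial(4, 2) = 6 times the form, hence 0.\<close>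
lemma heval_hessian_CHAR2:
  fixes b :: "(nat \<Rightarrow> nat) \<Rightarrow> 'a::comm_ring_1"
  assumes ch: "CHAR('a) = 2"
  shows "heval {..<3} 2 (hessian_coeff b x) x = 0"
  unfolding heval_def hessian_coeff_def hasse_def lessThan_3
  by (simp add: expand_mons mons_empty[of "Suc _"] CHAR2_numeral_even[OF ch] CHAR2_numeral_odd[OF ch] algebra_simps)

section \<open>The quartic surface X\<close>

definition w_part_coeff :: "(nat \<Rightarrow> 'a::comm_ring_1) \<Rightarrow> (nat \<Rightarrow> nat) \<Rightarrow> 'a" where
  "w_part_coeff y \<alpha> =
     hasse {..<4} 4 (\<lambda>m. if m = (\<lambda>i. if i = 0 then 4 else 0) then 1 else 0) \<alpha> y +
     hasse {..<4} 4 (\<lambda>m. if m = (\<lambda>i. if i = 0 then 2 else if i = 1 then 2 else 0) then 1 else 0) \<alpha> y"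

lemma hasse_Xcoef:
  "hasse {..<4} 4 (Xcoef b) \<alpha> y = w_part_coeff y \<alpha> +
     (if \<alpha> 0 = 0 then hasse {..<3} 4 b (\<lambda>i. \<alpha> (Suc i)) (\<lambda>i. y (Suc i)) else 0)"
  using hasse_lift[of 3 4 b \<alpha> y]
  by (simp add: Xcoef_def[abs_def] hasse_add w_part_coeff_def numeral_eq_Suc)

lemma lessThan_4: "{..<4::nat} = {0, 1, 2, 3}"
  by auto

lemma w_part_coeff_eq:
  "w_part_coeff y \<alpha> =
     of_nat (4 choose \<alpha> 0) * y 0 ^ (4 - \<alpha> 0) * (\<Prod>v\<in>{1,2,3}. of_nat (0 choose \<alpha> v) * y v ^ 0) +
     of_nat (2 choose \<alpha> 0) * y 0 ^ (2 - \<alpha> 0) * (of_nat (2 choose \<alpha> 1) * y 1 ^ (2 - \<alpha> 1)) *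
       (\<Prod>v\<in>{2,3}. of_nat (0 choose \<alpha> v) * y v ^ 0)"
  unfolding w_part_coeff_def
  by (subst (1 2) hasse_monomial) (simp_all add: mons_def lessThan_4 mult.assoc)

lemma w_part_coeff_0: "w_part_coeff y (\<lambda>_. 0) = y 0 ^ 4 + y 0 ^ 2 * y 1 ^ 2"
  by (simp add: w_part_coeff_eq)

lemma w_part_coeff_order1_CHAR2:
  assumes ch: "CHAR('a::comm_ring_1) = 2" and "j < 4"
  shows "w_part_coeff (y :: nat \<Rightarrow> 'a) (\<lambda>v. if v = j then 1 else 0) = 0"
  using assms(2) by (auto simp: w_part_coeff_eq less_Suc_eq numeral_eq_Suc CHAR2_numeral_even[OF ch])

lemma heval_w_part_hessian_CHAR2:
  assumes ch: "CHAR('a::comm_ring_1) = 2"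
  shows "heval {..<4} 2 (w_part_coeff (y :: nat \<Rightarrow> 'a)) u = (y 1 * u 0) ^ 2 + (y 0 * u 1) ^ 2"
  unfolding heval_def lessThan_4
  by (simp add: expand_mons mons_empty w_part_coeff_eq CHAR2_numeral_even[OF ch] CHAR2_numeral_odd[OF ch]
      algebra_simps)

lemma hpd_w_part_hessian_CHAR2:
  assumes ch: "CHAR('a::comm_ring_1) = 2" and "j < 4"
  shows "hpd {..<4} 2 (w_part_coeff (y :: nat \<Rightarrow> 'a)) j u = 0"
  using assms(2) unfolding hpd_def hasse_def lessThan_4
  by (auto simp: less_Suc_eq expand_mons mons_empty w_part_coeff_eq CHAR2_numeral_even[OF ch])

lemma hasse_lift_4: "hasse {..<4} d (\<lambda>m. if m 0 = 0 then c (\<lambda>i. m (Suc i)) else 0) \<alpha> x =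
    (if \<alpha> 0 = 0 then hasse {..<3} d c (\<lambda>i. \<alpha> (Suc i)) (\<lambda>i. x (Suc i)) else 0)"
  using hasse_lift[of 3 d c \<alpha> x] by simp

lemma heval_Xcoef:
  "heval {..<4} 4 (Xcoef b) y = y 0 ^ 4 + y 0 ^ 2 * y 1 ^ 2 + heval {..<3} 4 b (\<lambda>i. y (Suc i))"
  by (simp add: heval_eq_hasse_0 hasse_Xcoef w_part_coeff_0)

lemma hpd_Xcoef_CHAR2:
  fixes b :: "(nat \<Rightarrow> nat) \<Rightarrow> 'a::comm_ring_1"
  assumes ch: "CHAR('a) = 2"
  shows "hpd {..<4} 4 (Xcoef b) 0 y = 0"
    and "k < 3 \<Longrightarrow> hpd {..<4} 4 (Xcoef b) (Suc k) y = hpd {..<3} 4 b k (\<lambda>i. y (Suc i))"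
  by (simp_all add: hpd_def hasse_Xcoef w_part_coeff_order1_CHAR2[OF ch])

lemma hessian_Xcoef:
  "(\<lambda>\<alpha>. hasse {..<4} 4 (Xcoef b) \<alpha> y) = (\<lambda>\<alpha>. w_part_coeff y \<alpha> +
     (if \<alpha> 0 = 0 then hessian_coeff b (\<lambda>i. y (Suc i)) (\<lambda>i. \<alpha> (Suc i)) else 0))"
  unfolding hasse_Xcoef hessian_coeff_def ..

lemma heval_hessian_Xcoef_CHAR2:
  fixes b :: "(nat \<Rightarrow> nat) \<Rightarrow> 'a::comm_ring_1"
  assumes ch: "CHAR('a) = 2"
  shows "heval {..<4} 2 (\<lambda>\<alpha>. hasse {..<4} 4 (Xcoef b) \<alpha> y) u = (y 1 * u 0) ^ 2 + (y 0 * u 1) ^ 2 +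
    heval {..<3} 2 (hessian_coeff b (\<lambda>i. y (Suc i))) (\<lambda>i. u (Suc i))"
  using heval_w_part_hessian_CHAR2[OF ch, of y u]
  by (simp add: hessian_Xcoef heval_eq_hasse_0 hasse_add hasse_lift_4)

lemma hpd_hessian_Xcoef_CHAR2:
  fixes b :: "(nat \<Rightarrow> nat) \<Rightarrow> 'a::comm_ring_1"
  assumes ch: "CHAR('a) = 2"
  shows "hpd {..<4} 2 (\<lambda>\<alpha>. hasse {..<4} 4 (Xcoef b) \<alpha> y) 0 u = 0"
    and "k < 3 \<Longrightarrow> hpd {..<4} 2 (\<lambda>\<alpha>. hasse {..<4} 4 (Xcoef b) \<alpha> y) (Suc k) u =
      hpd {..<3} 2 (hessian_coeff b (\<lambda>i. y (Suc i))) k (\<lambda>i. u (Suc i))"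
  using hpd_w_part_hessian_CHAR2[OF ch, of 0 y u] hpd_w_part_hessian_CHAR2[OF ch, of "Suc k" y u]
  by (simp_all add: hessian_Xcoef hpd_def hasse_add hasse_lift_4)

definition crit_vecs :: "((nat \<Rightarrow> nat) \<Rightarrow> 'a::field) \<Rightarrow> (nat \<Rightarrow> 'a) set" where
  "crit_vecs b = {x \<in> nzvec {..<3}. \<forall>k<3. cross3 x (polar b x) k = 0}"

lemma CB_eq_CHAR2:
  fixes b :: "(nat \<Rightarrow> nat) \<Rightarrow> 'a::field"
  assumes "CHAR('a) = 2"
  shows "CB b = proj_class {..<3} ` crit_vecs b"
  by (simp add: CB_def crit_vecs_def hpd_quartic_CHAR2[OF assms])

lemma is_sing_vec_Xcoef_iff:
  fixes b :: "(nat \<Rightarrow> nat) \<Rightarrow> 'a::field"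
  assumes ch: "CHAR('a) = 2"
  shows "is_sing_vec {..<4} 4 (Xcoef b) y \<longleftrightarrow> y \<in> nzvec {..<4} \<and>
     y 0 ^ 4 + y 0 ^ 2 * y 1 ^ 2 + heval {..<3} 4 b (\<lambda>i. y (Suc i)) = 0 \<and>
     (\<forall>k<3. cross3 (\<lambda>i. y (Suc i)) (polar b (\<lambda>i. y (Suc i))) k = 0)"
proof -
  have "(\<forall>u\<in>{..<4}. hpd {..<4} 4 (Xcoef b) u y = 0) \<longleftrightarrow>
      (\<forall>k<3. hpd {..<4} 4 (Xcoef b) (Suc k) y = 0)"
    using hpd_Xcoef_CHAR2(1)[OF ch] by (auto simp: less_Suc_eq_0_disj numeral_eq_Suc)
  then show ?thesis
    by (simp add: is_sing_vec_def heval_Xcoef hpd_Xcoef_CHAR2(2)[OF ch] hpd_quartic_CHAR2[OF ch])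
qed

lemma is_sing_vec_Xcoef_scale:
  fixes b :: "(nat \<Rightarrow> nat) \<Rightarrow> 'a::field"
  assumes ch: "CHAR('a) = 2" and y: "is_sing_vec {..<4} 4 (Xcoef b) y" and t: "t \<noteq> 0"
  shows "is_sing_vec {..<4} 4 (Xcoef b) (\<lambda>v. t * y v)"
proof -
  have "(t * y 0) ^ 4 + (t * y 0) ^ 2 * (t * y 1) ^ 2 + heval {..<3} 4 b (\<lambda>i. t * y (Suc i)) =
      t ^ 4 * (y 0 ^ 4 + y 0 ^ 2 * y 1 ^ 2 + heval {..<3} 4 b (\<lambda>i. y (Suc i)))"
    using heval_homogeneous[of "{..<3}" 4 b t "\<lambda>i. y (Suc i)"]
    by (simp add: algebra_simps)
  then show ?thesis
    using y t by (simp add: is_sing_vec_Xcoef_iff[OF ch] nzvec_scale cross3_polar_scale[of t "\<lambda>i. y (Suc i)"])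
qed

lemma is_sing_vec_Xcoef_crit_vecs:
  fixes b :: "(nat \<Rightarrow> nat) \<Rightarrow> 'a::field"
  assumes ch: "CHAR('a) = 2" and y: "is_sing_vec {..<4} 4 (Xcoef b) y"
  shows "(\<lambda>i. y (Suc i)) \<in> crit_vecs b"
proof -
  have y': "y \<in> nzvec {..<4}" "y 0 ^ 4 + y 0 ^ 2 * y 1 ^ 2 + heval {..<3} 4 b (\<lambda>i. y (Suc i)) = 0"
    "\<forall>k<3. cross3 (\<lambda>i. y (Suc i)) (polar b (\<lambda>i. y (Suc i))) k = 0"
    using y by (simp_all add: is_sing_vec_Xcoef_iff[OF ch])
  have "\<exists>v<3. y (Suc v) \<noteq> 0"
  proof (rule ccontr)
    assume "\<not> ?thesis"
    moreover have "y (Suc v) = 0" if "\<not> v < 3" for v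
      using y'(1) that by (simp add: nzvec_def)
    ultimately have Y: "(\<lambda>i. y (Suc i)) = (\<lambda>i. 0 * y (Suc i))"
      by (auto simp: fun_eq_iff)
    have "heval {..<3} 4 b (\<lambda>i. y (Suc i)) = 0"
      using heval_homogeneous[of "{..<3}" 4 b 0 "\<lambda>i. y (Suc i)"] Y by simp
    then have "y 0 = 0" using y'(2) Y by (simp add: fun_eq_iff)
    then have "\<forall>v. y v = 0" using Y by (metis mult_zero_left not0_implies_Suc)
    then show False using y'(1) by (simp add: nzvec_def)
  qed
  then show ?thesis using y' by (auto simp: crit_vecs_def nzvec_def)
qed

lemma bij_betw_normalized_sing_vecs_Xcoef:
  fixes b :: "(nat \<Rightarrow> nat) \<Rightarrow> 'a::field"
  assumes ch: "CHAR('a) = 2"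
  shows "bij_betw (\<lambda>y. ((\<lambda>i. y (Suc i)), y 0)) {y. is_sing_vec {..<4} 4 (Xcoef b) y \<and> y 1 = 1}
    (SIGMA x:{x\<in>crit_vecs b. x 0 = 1}. {w. w^4 + w^2 + heval {..<3} 4 b x = 0})"
proof (rule bij_betw_byWitness[where f' = "\<lambda>(x, w). case_nat w x"])
  have "case_nat w x \<in> nzvec {..<4}" if "x \<in> nzvec {..<3}" for w and x :: "nat \<Rightarrow> 'a"
    using that by (auto simp: nzvec_def split: nat.split)
  then show "(\<lambda>(x, w). case_nat w x) ` (SIGMA x:{x\<in>crit_vecs b. x 0 = 1}. {w. w^4 + w^2 + heval {..<3} 4 b x = 0})
      \<subseteq> {y. is_sing_vec {..<4} 4 (Xcoef b) y \<and> y 1 = 1}"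
    by (auto simp: is_sing_vec_Xcoef_iff[OF ch] crit_vecs_def)
  show "(\<lambda>y. ((\<lambda>i. y (Suc i)), y 0)) ` {y. is_sing_vec {..<4} 4 (Xcoef b) y \<and> y 1 = 1}
      \<subseteq> (SIGMA x:{x\<in>crit_vecs b. x 0 = 1}. {w. w^4 + w^2 + heval {..<3} 4 b x = 0})"
    using is_sing_vec_Xcoef_crit_vecs[OF ch] by (auto simp: is_sing_vec_Xcoef_iff[OF ch])
qed (auto simp: fun_eq_iff split: nat.split)

lemma card_Sing_Xcoef_CHAR2:
  fixes b :: "(nat \<Rightarrow> nat) \<Rightarrow> 'a::alg_closed_field"
  assumes ch: "CHAR('a) = 2" and fin: "finite (CB b)" and nz: "\<forall>x\<in>crit_vecs b. x 0 \<noteq> 0"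
  shows "finite (Sing {..<4} 4 (Xcoef b))" "card (Sing {..<4} 4 (Xcoef b)) = 2 * card (CB b)"
proof -
  let ?N1 = "{x\<in>crit_vecs b. x 0 = 1}" and ?N2 = "{y. is_sing_vec {..<4} 4 (Xcoef b) y \<and> y 1 = 1}"
  let ?W = "\<lambda>x. {w. w^4 + w^2 + heval {..<3} 4 b x = 0}"
  have bij1: "bij_betw (proj_class {..<3}) ?N1 (CB b)"
    unfolding CB_eq_CHAR2[OF ch]
    by (rule bij_betw_proj_class_normalized) (auto simp: crit_vecs_def nzvec_def cross3_polar_scale nz)
  have bij2: "bij_betw (proj_class {..<4}) ?N2 (Sing {..<4} 4 (Xcoef b))"
    unfolding Sing_def
  proof (rule bij_betw_proj_class_normalized[where S = "{y. is_sing_vec {..<4} 4 (Xcoef b) y}", simplified])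
    fix y assume y: "is_sing_vec {..<4} 4 (Xcoef b) y"
    then show "\<forall>v. v \<notin> {..<4} \<longrightarrow> y v = 0" by (simp add: is_sing_vec_def nzvec_def)
    show "y 1 \<noteq> 0" using bspec[OF nz is_sing_vec_Xcoef_crit_vecs[OF ch y]] by simp
  qed (simp add: is_sing_vec_Xcoef_scale[OF ch])
  have "finite ?N1" "card ?N1 = card (CB b)"
    using bij_betw_finite[OF bij1] bij_betw_same_card[OF bij1] fin by simp_all
  moreover have "finite (?W x)" "card (?W x) = 2" for x
    using card_roots_quartic_CHAR2[OF ch] by (auto intro: card_ge_0_finite)
  ultimately have "finite (Sigma ?N1 ?W)" "card (Sigma ?N1 ?W) = 2 * card (CB b)"
    by simp_all
  moreover note bij3 = bij_betw_normalized_sing_vecs_Xcoef[OF ch, of b]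
  ultimately have "finite ?N2" "card ?N2 = 2 * card (CB b)"
    using bij_betw_finite[OF bij3] bij_betw_same_card[OF bij3] by simp_all
  then show "finite (Sing {..<4} 4 (Xcoef b))" "card (Sing {..<4} 4 (Xcoef b)) = 2 * card (CB b)"
    using bij_betw_finite[OF bij2] bij_betw_same_card[OF bij2] by simp_all
qed

section \<open>Generic quartics\<close>

definition polar_det :: "((nat \<Rightarrow> nat) \<Rightarrow> 'a::comm_ring_1) \<Rightarrow> 'a" where
  "polar_det b = det3 (polar_mat b 0) (polar_mat b 1) (polar_mat b 2)"

definition polar_inv :: "((nat \<Rightarrow> nat) \<Rightarrow> 'a::field) \<Rightarrow> nat \<Rightarrow> nat \<Rightarrow> 'a" where
  "polar_inv b i j = adj3 (polar_mat b) i j / polar_det b"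

text \<open>B is generic if this polynomial in its coefficients does not vanish: the polar matrix is
  invertible and the two nondegeneracy conditions of card_frob_solutions hold for its inverse,
  whose denominators are cleared by using the adjugate matrix.\<close>
definition generic_poly :: "((nat \<Rightarrow> nat) \<Rightarrow> 'a::comm_ring_1) \<Rightarrow> 'a" where
  "generic_poly b = (let r = frob_iterate (adj3 (polar_mat b)) in
     polar_det b * det3 unit0 (r 0) (r 1) * det3 (r 2) (r 0) (r 1))"

lemma generic_poly_nonzero:
  fixes b :: "(nat \<Rightarrow> nat) \<Rightarrow> 'a::field"
  assumes "generic_poly b \<noteq> 0"
  shows "polar_det b \<noteq> 0"
    and "det3 unit0 (frob_iterate (polar_inv b) 0) (frob_iterate (polar_inv b) 1) \<noteq> 0"
    and "det3 (frob_iterate (polar_inv b) 2) (frob_iterate (polar_inv b) 0) (frob_iterate (polar_inv b) 1) \<noteq> 0"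
proof -
  let ?r = "frob_iterate (adj3 (polar_mat b))" and ?s = "inverse (polar_det b)"
  have d: "polar_det b \<noteq> 0" and q1: "det3 unit0 (?r 0) (?r 1) \<noteq> 0" and q2: "det3 (?r 2) (?r 0) (?r 1) \<noteq> 0"
    using assms by (auto simp: generic_poly_def Let_def)
  have "polar_inv b = (\<lambda>i j. adj3 (polar_mat b) i j * ?s)"
    by (simp add: polar_inv_def fun_eq_iff divide_inverse)
  then have iter: "frob_iterate (polar_inv b) k = (\<lambda>j. ?r k j * ?s ^ (2 ^ Suc k - 1))" for k
    by (simp add: frob_iterate_scale)
  have "det3 unit0 (\<lambda>j. p j * a) (\<lambda>j. q j * c) = det3 unit0 p q * (a * c)" for p q and a c :: 'a
    by (simp add: det3_def algebra_simps)
  then show "polar_det b \<noteq> 0"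
    and "det3 unit0 (frob_iterate (polar_inv b) 0) (frob_iterate (polar_inv b) 1) \<noteq> 0"
    and "det3 (frob_iterate (polar_inv b) 2) (frob_iterate (polar_inv b) 0) (frob_iterate (polar_inv b) 1) \<noteq> 0"
    using d q1 q2 unfolding iter by (simp_all add: det3_scale)
qed

lemma polar_fixed_iff_frob_solution:
  fixes b :: "(nat \<Rightarrow> nat) \<Rightarrow> 'a::field"
  assumes d: "polar_det b \<noteq> 0" and z: "\<forall>i\<ge>3. z i = 0"
  shows "(\<forall>i<3. polar b z i = z i) \<longleftrightarrow> z \<in> frob_solutions (polar_inv b)"
proof -
  let ?M = "polar_mat b"
  have inv: "mat_vec (polar_inv b) w = (\<lambda>i. mat_vec (adj3 ?M) w i / polar_det b)" for w
    by (simp add: mat_vec_def polar_inv_def dot3_def add_divide_distrib fun_eq_iff)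
  have "(\<forall>i<3. polar b z i = z i) \<longleftrightarrow> (\<forall>i<3. sq_vec z i = mat_vec (polar_inv b) z i)"
  proof
    assume fixed: "\<forall>i<3. polar b z i = z i"
    have "mat_vec (adj3 ?M) z = mat_vec (adj3 ?M) (polar b z)"
      using fixed by (intro mat_vec_cong) simp_all
    then show "\<forall>i<3. sq_vec z i = mat_vec (polar_inv b) z i"
      using d by (simp add: inv polar_def adj3_mult polar_det_def)
  next
    assume sol: "\<forall>i<3. sq_vec z i = mat_vec (polar_inv b) z i"
    have "mat_vec ?M (sq_vec z) = mat_vec ?M (\<lambda>i. mat_vec (adj3 ?M) z i / polar_det b)"
      using sol by (intro mat_vec_cong) (simp_all add: inv)
    also have "\<dots> = (\<lambda>i. mat_vec ?M (mat_vec (adj3 ?M) z) i / polar_det b)"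
      using d by (simp add: mat_vec_def dot3_def fun_eq_iff field_simps)
    finally show "\<forall>i<3. polar b z i = z i"
      using d by (simp add: polar_def mult_adj3 polar_det_def)
  qed
  then show ?thesis using z by (simp add: frob_solutions_def)
qed

lemma crit_vecs_polar_parallel:
  fixes b :: "(nat \<Rightarrow> nat) \<Rightarrow> 'a::field"
  assumes d: "polar_det b \<noteq> 0" and x: "x \<in> crit_vecs b"
  obtains \<mu> where "\<mu> \<noteq> 0" "\<forall>i<3. polar b x i = \<mu> * x i"
proof -
  obtain i where i: "i < 3" "x i \<noteq> 0" using x by (auto simp: crit_vecs_def nzvec_def)
  then obtain \<mu> where \<mu>: "\<forall>i<3. polar b x i = \<mu> * x i"
    using cross3_eq_0_imp_parallel[of x "polar b x" i] x i by (auto simp: crit_vecs_def)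
  have "\<mu> \<noteq> 0"
  proof
    assume "\<mu> = 0"
    then have "mat_vec (adj3 (polar_mat b)) (polar b x) = mat_vec (adj3 (polar_mat b)) (\<lambda>_. 0)"
      using \<mu> by (intro mat_vec_cong) simp_all
    then have "polar_det b * sq_vec x i = 0"
      using adj3_mult[OF i(1), of "polar_mat b" "sq_vec x"]
      by (simp add: polar_def polar_det_def mat_vec_def dot3_def)
    then show False using d i by (simp add: sq_vec_def)
  qed
  then show thesis using \<mu> by (rule that)
qed

lemma frob_solution_polar_fixed:
  fixes b :: "(nat \<Rightarrow> nat) \<Rightarrow> 'a::field"
  assumes "polar_det b \<noteq> 0" "z \<in> frob_solutions (polar_inv b)"
  shows "\<forall>i<3. polar b z i = z i"
  using polar_fixed_iff_frob_solution[OF assms(1)] assms(2) by (simp add: frob_solutions_def)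

lemma crit_vecs_scaled_frob_solution:
  fixes b :: "(nat \<Rightarrow> nat) \<Rightarrow> 'a::field"
  assumes d: "polar_det b \<noteq> 0" and x: "x \<in> crit_vecs b"
    and \<mu>: "\<mu> \<noteq> 0" "\<forall>i<3. polar b x i = \<mu> * x i"
  shows "(\<lambda>v. inverse \<mu> * x v) \<in> frob_solutions (polar_inv b)"
proof -
  have "\<forall>i<3. polar b (\<lambda>v. inverse \<mu> * x v) i = inverse \<mu> * x i"
    using \<mu> by (simp add: polar_scale power2_eq_square)
  moreover have "\<forall>i\<ge>3. inverse \<mu> * x i = 0" using x by (simp add: crit_vecs_def nzvec_def)
  ultimately show ?thesis using polar_fixed_iff_frob_solution[OF d] by simp
qed

lemma frob_solution_scaled_crit_vecs:
  fixes b :: "(nat \<Rightarrow> nat) \<Rightarrow> 'a::field"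
  assumes d: "polar_det b \<noteq> 0" and z: "z \<in> frob_solutions (polar_inv b)" and z0: "z 0 \<noteq> 0"
  shows "(\<lambda>v. inverse (z 0) * z v) \<in> crit_vecs b"
proof -
  have "\<forall>i<3. polar b (\<lambda>v. inverse (z 0) * z v) i = inverse (z 0) * (inverse (z 0) * z i)"
    using frob_solution_polar_fixed[OF d z] by (simp add: polar_scale power2_eq_square)
  then have "cross3 (\<lambda>v. inverse (z 0) * z v) (polar b (\<lambda>v. inverse (z 0) * z v)) k = 0" for k
    using cross3_parallel[of "\<lambda>v. inverse (z 0) * z v" "inverse (z 0)" k]
    by (simp add: cross3_def all_less_3)
  moreover have "(\<lambda>v. inverse (z 0) * z v) \<in> nzvec {..<3}"
    using z z0 by (auto simp: frob_solutions_def nzvec_def not_less intro!: bexI[of _ 0])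
  ultimately show ?thesis by (simp add: crit_vecs_def)
qed

lemma crit_vecs_normalized_polar:
  fixes b :: "(nat \<Rightarrow> nat) \<Rightarrow> 'a::field"
  assumes "polar_det b \<noteq> 0" "x \<in> crit_vecs b" "x 0 = 1"
  shows "polar b x 0 \<noteq> 0" "\<forall>i<3. polar b x i = polar b x 0 * x i"
proof -
  obtain \<mu> where "\<mu> \<noteq> 0" "\<forall>i<3. polar b x i = \<mu> * x i"
    using crit_vecs_polar_parallel[OF assms(1,2)] by blast
  moreover from this(2) have "polar b x 0 = \<mu>" using assms(3) by simp
  ultimately show "polar b x 0 \<noteq> 0" "\<forall>i<3. polar b x i = polar b x 0 * x i" by simp_all
qed

lemma bij_betw_normalized_crit_vecs_frob_solutions:
  fixes b :: "(nat \<Rightarrow> nat) \<Rightarrow> 'a::field"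
  assumes d: "polar_det b \<noteq> 0"
    and first: "\<And>z. z \<in> frob_solutions (polar_inv b) \<Longrightarrow> z 0 = 0 \<Longrightarrow> z = (\<lambda>_. 0)"
  shows "bij_betw (\<lambda>x v. inverse (polar b x 0) * x v) {x\<in>crit_vecs b. x 0 = 1}
    (frob_solutions (polar_inv b) - {\<lambda>_. 0})"
proof (rule bij_betw_byWitness[where f' = "\<lambda>z v. inverse (z 0) * z v"])
  let ?T = "frob_solutions (polar_inv b) - {\<lambda>_. 0}"
  have T0: "z 0 \<noteq> 0" if "z \<in> ?T" for z
    using that first by blast
  show "\<forall>x\<in>{x\<in>crit_vecs b. x 0 = 1}. (\<lambda>v. inverse (inverse (polar b x 0) * x 0) * (inverse (polar b x 0) * x v)) = x"
    using crit_vecs_normalized_polar(1)[OF d] by (auto simp: fun_eq_iff)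
  show "\<forall>z\<in>?T. (\<lambda>v. inverse (polar b (\<lambda>v. inverse (z 0) * z v) 0) * (inverse (z 0) * z v)) = z"
  proof (intro ballI ext)
    fix z v assume z: "z \<in> ?T"
    then have "polar b z 0 = z 0" using frob_solution_polar_fixed[OF d] by simp
    then have "polar b (\<lambda>v. inverse (z 0) * z v) 0 = inverse (z 0)"
      using T0[OF z] by (simp add: polar_scale power2_eq_square)
    then show "inverse (polar b (\<lambda>v. inverse (z 0) * z v) 0) * (inverse (z 0) * z v) = z v"
      using T0[OF z] by simp
  qed
  show "(\<lambda>x v. inverse (polar b x 0) * x v) ` {x\<in>crit_vecs b. x 0 = 1} \<subseteq> ?T"
  proof clarify
    fix x assume x: "x \<in> crit_vecs b" "x 0 = 1"
    note \<mu> = crit_vecs_normalized_polar[OF d x]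
    have "(\<lambda>v. inverse (polar b x 0) * x v) 0 \<noteq> 0" using \<mu>(1) x(2) by simp
    then show "(\<lambda>v. inverse (polar b x 0) * x v) \<in> ?T"
      using crit_vecs_scaled_frob_solution[OF d x(1) \<mu>] by (auto dest: fun_cong[of _ _ 0])
  qed
  show "(\<lambda>z v. inverse (z 0) * z v) ` ?T \<subseteq> {x\<in>crit_vecs b. x 0 = 1}"
    using frob_solution_scaled_crit_vecs[OF d] T0 by auto
qed

context
  fixes b :: "(nat \<Rightarrow> nat) \<Rightarrow> 'a::alg_closed_field"
  assumes ch: "CHAR('a) = 2" and generic: "generic_poly b \<noteq> 0"
begin

private lemmas det_nonzero = generic_poly_nonzero(1)[OF generic]
private lemmas frob = card_frob_solutions[OF ch generic_poly_nonzero(2,3)[OF generic]]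
  frob_solutions_first_eq_0[OF ch generic_poly_nonzero(2,3)[OF generic]]

lemma crit_vecs_first_nonzero_generic:
  assumes crit: "x \<in> crit_vecs b"
  shows "x 0 \<noteq> 0"
proof
  assume x0: "x 0 = 0"
  obtain \<mu> where \<mu>: "\<mu> \<noteq> 0" "\<forall>i<3. polar b x i = \<mu> * x i"
    using crit_vecs_polar_parallel[OF det_nonzero crit] by blast
  have "(\<lambda>v. inverse \<mu> * x v) = (\<lambda>_. 0)"
    by (rule frob(2)[OF crit_vecs_scaled_frob_solution[OF det_nonzero crit \<mu>]]) (simp add: x0)
  then have "\<forall>v. x v = 0" using \<mu>(1) by (simp add: fun_eq_iff)
  then show False using crit by (simp add: crit_vecs_def nzvec_def)
qed

lemma card_crit_vecs_normalized_generic: "card {x\<in>crit_vecs b. x 0 = 1} = 7"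
proof -
  have "card {x\<in>crit_vecs b. x 0 = 1} = card (frob_solutions (polar_inv b) - {\<lambda>_. 0})"
    using bij_betw_normalized_crit_vecs_frob_solutions[OF det_nonzero frob(2)] by (rule bij_betw_same_card)
  also have "\<dots> = 7"
    using card_Diff_singleton[OF zero_in_frob_solutions[of "polar_inv b"]] frob(1) by simp
  finally show ?thesis .
qed

end

section \<open>The singular points of X are nodes\<close>

lemma tangent_cone_Xcoef_parallel:
  fixes b :: "(nat \<Rightarrow> nat) \<Rightarrow> 'a::field"
  assumes ch: "CHAR('a) = 2" and v0: "v0 < 4" "y v0 = 1" "u v0 = 0"
    and \<mu>: "\<mu> \<noteq> 0" "\<forall>i<3. polar b (\<lambda>i. y (Suc i)) i = \<mu> * y (Suc i)" and y1: "y 1 \<noteq> 0"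
    and grad: "\<And>j. j < 4 \<Longrightarrow> j \<noteq> v0 \<Longrightarrow> hpd {..<4} 2 (\<lambda>\<alpha>. hasse {..<4} 4 (Xcoef b) \<alpha> y) j u = 0"
  obtains \<nu> where "\<forall>i<3. u (Suc i) = \<nu> * y (Suc i)"
proof -
  define Y where "Y = (\<lambda>i. y (Suc i))"
  define U where "U = (\<lambda>i. u (Suc i))"
  have cross: "cross3 U Y k = 0" if "k < 3" "Suc k \<noteq> v0" for k
  proof -
    have "cross3 U (polar b Y) k = 0"
      using grad[of "Suc k"] that hpd_hessian_Xcoef_CHAR2(2)[OF ch, of k b y u]
        hpd_hessian_CHAR2[OF ch that(1)] by (simp add: U_def Y_def)
    moreover have "cross3 U (polar b Y) k = \<mu> * cross3 U Y k"
      using \<mu>(2) by (simp add: Y_def cross3_def all_less_3 algebra_simps)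
    ultimately show ?thesis using \<mu>(1) by simp
  qed
  show thesis
  proof (cases v0)
    case 0
    then have "\<forall>k<3. cross3 Y U k = 0" using cross by (subst cross3_antisym) simp
    then show thesis using cross3_eq_0_imp_parallel[of Y U 0] y1 that by (auto simp: U_def Y_def)
  next
    case (Suc k0)
    then have "\<forall>i<3. U i = 0"
      using cross3_eq_0_off_imp_0[of k0 U Y] cross v0 by (auto simp: U_def Y_def)
    then show thesis by (intro that[of 0]) (simp add: U_def)
  qed
qed

text \<open>Once (u 1, u 2, u 3) is a multiple of (y 1, y 2, y 3), the Hessian quadric of B vanishes
  on it by Euler's formula, and the cone equation becomes the square (y 1 (u 0 + \<nu> y 0))^2.\<close>
lemma tangent_cone_Xcoef_multiple:
  fixes b :: "(nat \<Rightarrow> nat) \<Rightarrow> 'a::field"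
  assumes ch: "CHAR('a) = 2" and y1: "y 1 \<noteq> 0" and \<nu>: "\<forall>i<3. u (Suc i) = \<nu> * y (Suc i)"
    and Q: "heval {..<4} 2 (\<lambda>\<alpha>. hasse {..<4} 4 (Xcoef b) \<alpha> y) u = 0"
  shows "u 0 = \<nu> * y 0"
proof -
  define Y where "Y = (\<lambda>i. y (Suc i))"
  have "heval {..<3} 2 (hessian_coeff b Y) (\<lambda>i. u (Suc i)) =
      heval {..<3} 2 (hessian_coeff b Y) (\<lambda>i. \<nu> * Y i)"
    unfolding heval_def using \<nu> by (intro sum.cong prod.cong refl) (auto simp: Y_def)
  also have "\<dots> = 0" by (simp add: heval_homogeneous heval_hessian_CHAR2[OF ch])
  finally have "(y 1 * u 0) ^ 2 + (y 0 * u 1) ^ 2 = 0"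
    using Q heval_hessian_Xcoef_CHAR2[OF ch, of b y u] by (simp add: Y_def)
  also have "(y 1 * u 0) ^ 2 + (y 0 * u 1) ^ 2 = (y 1 * (u 0 + \<nu> * y 0)) ^ 2"
    using \<nu> by (simp add: CHAR2_power2_add[OF ch] algebra_simps)
  finally show ?thesis using y1 CHAR2_add_eq_0_iff[OF ch] by simp
qed

text \<open>The tangent cone at a singular point y has no singular point u: it would be a multiple of
  y, which is impossible in the chart y v0 = 1 since u v0 = 0.\<close>
lemma tangent_cone_Xcoef_smooth:
  fixes b :: "(nat \<Rightarrow> nat) \<Rightarrow> 'a::alg_closed_field"
  assumes ch: "CHAR('a) = 2" and generic: "generic_poly b \<noteq> 0"
    and y: "is_sing_vec {..<4} 4 (Xcoef b) y" and v0: "v0 < 4" "y v0 = 1"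
  shows "smooth_hyp ({..<4} - {v0}) 2 (\<lambda>\<alpha>. hasse {..<4} 4 (Xcoef b) \<alpha> y)"
  unfolding smooth_hyp_def
proof
  let ?c = "\<lambda>\<alpha>. hasse {..<4} 4 (Xcoef b) \<alpha> y"
  assume "\<exists>u. is_sing_vec ({..<4} - {v0}) 2 ?c u"
  then obtain u where u: "u \<in> nzvec ({..<4} - {v0})" "heval ({..<4} - {v0}) 2 ?c u = 0"
      "\<forall>j\<in>{..<4} - {v0}. hpd ({..<4} - {v0}) 2 ?c j u = 0"
    by (auto simp: is_sing_vec_def)
  have uv0: "u v0 = 0" using u(1) by (simp add: nzvec_def)
  have Q: "heval {..<4} 2 ?c u = 0"
    using u(2) hasse_restrict_hyperplane[of "{..<4}" v0 "\<lambda>_. 0" u 2 ?c] v0 uv0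
    by (simp add: heval_eq_hasse_0)
  have grad: "hpd {..<4} 2 ?c j u = 0" if "j < 4" "j \<noteq> v0" for j
    using u(3) hasse_restrict_hyperplane[of "{..<4}" v0 "\<lambda>v. if v = j then 1 else 0" u 2 ?c]
      v0 uv0 that by (simp add: hpd_def)
  have crit: "(\<lambda>i. y (Suc i)) \<in> crit_vecs b" by (rule is_sing_vec_Xcoef_crit_vecs[OF ch y])
  then have y1: "y 1 \<noteq> 0" using crit_vecs_first_nonzero_generic[OF ch generic] by fastforce
  obtain \<mu> where \<mu>: "\<mu> \<noteq> 0" "\<forall>i<3. polar b (\<lambda>i. y (Suc i)) i = \<mu> * y (Suc i)"
    using crit_vecs_polar_parallel[OF generic_poly_nonzero(1)[OF generic] crit] by blast
  obtain \<nu> where \<nu>: "\<forall>i<3. u (Suc i) = \<nu> * y (Suc i)"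
    using tangent_cone_Xcoef_parallel[OF ch v0 uv0 \<mu> y1 grad] by blast
  have "u v = \<nu> * y v" for v
  proof (cases v)
    case (Suc i)
    then show ?thesis
      using \<nu> u(1) y by (cases "i < 3") (auto simp: nzvec_def is_sing_vec_def)
  qed (simp add: tangent_cone_Xcoef_multiple[OF ch y1 \<nu> Q])
  then show False using u(1) uv0 v0 by (simp add: nzvec_def)
qed

section \<open>Genericity is a nontrivial polynomial condition\<close>

context
  fixes V :: "'v set"
  assumes V: "finite V"
begin

lemma poly_fun_dot3:
  "(\<And>j. poly_fun V (\<lambda>x. p x j)) \<Longrightarrow> (\<And>j. poly_fun V (\<lambda>x. q x j)) \<Longrightarrow>
    poly_fun V (\<lambda>x. dot3 (p x) (q x))"
  unfolding dot3_def by (intro poly_fun_add[OF V] poly_fun_mult[OF V])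

lemma poly_fun_det3:
  "(\<And>j. poly_fun V (\<lambda>x. p x j)) \<Longrightarrow> (\<And>j. poly_fun V (\<lambda>x. q x j)) \<Longrightarrow>
    (\<And>j. poly_fun V (\<lambda>x. r x j)) \<Longrightarrow> poly_fun V (\<lambda>x. det3 (p x) (q x) (r x))"
  unfolding det3_def by (intro poly_fun_add[OF V] poly_fun_diff[OF V] poly_fun_mult[OF V])

lemma poly_fun_cross3:
  "(\<And>j. poly_fun V (\<lambda>x. p x j)) \<Longrightarrow> (\<And>j. poly_fun V (\<lambda>x. q x j)) \<Longrightarrow>
    poly_fun V (\<lambda>x. cross3 (p x) (q x) j)"
  unfolding cross3_def by (intro poly_fun_if poly_fun_diff[OF V] poly_fun_mult[OF V])

lemma poly_fun_adj3:
  assumes "\<And>i j. poly_fun V (\<lambda>x. M x i j)"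
  shows "poly_fun V (\<lambda>x. adj3 (M x) i j)"
proof -
  have "poly_fun V (\<lambda>x. cross3 (\<lambda>j. M x j k) (\<lambda>j. M x j l) j)" for k l
    by (intro poly_fun_cross3 assms)
  then show ?thesis by (cases "i = 0"; cases "i = 1") (simp_all add: adj3_def)
qed

lemma poly_fun_frob_dual:
  "(\<And>i j. poly_fun V (\<lambda>x. M x i j)) \<Longrightarrow> (\<And>j. poly_fun V (\<lambda>x. r x j)) \<Longrightarrow>
    poly_fun V (\<lambda>x. frob_dual (M x) (r x) j)"
  unfolding frob_dual_def sq_vec_def power2_eq_square by (intro poly_fun_dot3 poly_fun_mult[OF V])

lemma poly_fun_frob_iterate:
  assumes "\<And>i j. poly_fun V (\<lambda>x. M x i j)"
  shows "poly_fun V (\<lambda>x. frob_iterate (M x) k j)"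
proof (induction k arbitrary: j)
  case 0
  show ?case by (simp add: frob_iterate_def assms)
next
  case (Suc k)
  show ?case
    using poly_fun_frob_dual[OF assms Suc.IH] by (simp add: frob_iterate_def)
qed

lemma poly_fun_unit0: "poly_fun V (\<lambda>x. unit0 j)"
  by (rule poly_fun_const[OF V])

end

lemma poly_fun_generic_poly: "poly_fun (mons {..<3} 4) (generic_poly :: _ \<Rightarrow> 'a::comm_ring_1)"
proof -
  have V: "finite (mons {..<3::nat} 4)" by (simp add: finite_mons)
  have coeff: "poly_fun (mons {..<3} 4) (\<lambda>b::(nat \<Rightarrow> nat) \<Rightarrow> 'a. coeff3 b i j k)" if "i + j + k = 4" for i j k
    unfolding coeff3_def using that
    by (intro poly_fun_var[OF V]) (simp add: mons_def lessThan_3)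
  have polar: "poly_fun (mons {..<3} 4) (\<lambda>b::(nat \<Rightarrow> nat) \<Rightarrow> 'a. polar_mat b i j)" for i j
    unfolding polar_mat_def by (intro poly_fun_if coeff) simp_all
  show ?thesis
    unfolding generic_poly_def Let_def polar_det_def
    by (intro poly_fun_mult[OF V] poly_fun_det3[OF V] poly_fun_frob_iterate[OF V] poly_fun_adj3[OF V]
        poly_fun_unit0[OF V] polar)
qed

definition klein_quartic :: "(nat \<Rightarrow> nat) \<Rightarrow> 'a::comm_ring_1" where
  "klein_quartic m = (if m 0 = 3 \<and> m 1 = 0 \<and> m 2 = 1 then 1 else if m 0 = 1 \<and> m 1 = 3 \<and> m 2 = 0 then 1
     else if m 0 = 0 \<and> m 1 = 1 \<and> m 2 = 3 then 1 else 0)"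

lemma generic_poly_klein_quartic: "generic_poly (klein_quartic :: _ \<Rightarrow> 'a::field) \<noteq> 0"
  by (simp add: generic_poly_def polar_det_def frob_iterate_def numeral_2_eq_2 frob_dual_def
      adj3_def cross3_def polar_mat_def coeff3_def klein_quartic_def det3_def dot3_def sq_vec_def unit0_def)

lemma crit_vecs_first_nonzero_of_CB:
  fixes b :: "(nat \<Rightarrow> nat) \<Rightarrow> 'a::field"
  assumes "CHAR('a) = 2" "\<forall>P\<in>CB b. \<forall>x\<in>P. x 0 \<noteq> 0" "x \<in> crit_vecs b"
  shows "x 0 \<noteq> 0"
proof -
  have "proj_class {..<3} x \<in> CB b" using assms(1,3) by (simp add: CB_eq_CHAR2)
  moreover have "x \<in> proj_class {..<3} x"
    using assms(3) by (intro proj_class_self) (simp add: crit_vecs_def nzvec_def)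
  ultimately show ?thesis using assms(2) by blast
qed

lemma Sing_Xcoef_generic:
  fixes b :: "(nat \<Rightarrow> nat) \<Rightarrow> 'a::alg_closed_field"
  assumes ch: "CHAR('a) = 2" and generic: "generic_poly b \<noteq> 0"
  shows "finite (Sing {..<4} 4 (Xcoef b))" "card (Sing {..<4} 4 (Xcoef b)) = 14"
    "\<forall>P\<in>Sing {..<4} 4 (Xcoef b). is_node {..<4} 4 (Xcoef b) P"
proof -
  have "bij_betw (proj_class {..<3}) {x\<in>crit_vecs b. x 0 = 1} (CB b)"
    unfolding CB_eq_CHAR2[OF ch]
    by (rule bij_betw_proj_class_normalized)
      (auto simp: crit_vecs_def nzvec_def cross3_polar_scale crit_vecs_first_nonzero_generic[OF ch generic])
  then have fin: "finite (CB b)" and card: "card (CB b) = 7"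
    using card_crit_vecs_normalized_generic[OF ch generic]
    by (auto simp: bij_betw_same_card[symmetric] intro: card_ge_0_finite)
  show "finite (Sing {..<4} 4 (Xcoef b))" "card (Sing {..<4} 4 (Xcoef b)) = 14"
    using card_Sing_Xcoef_CHAR2[OF ch fin] crit_vecs_first_nonzero_generic[OF ch generic] card
    by simp_all
  show "\<forall>P\<in>Sing {..<4} 4 (Xcoef b). is_node {..<4} 4 (Xcoef b) P"
    unfolding is_node_def
  proof (intro ballI conjI impI)
    fix P v0 y assume P: "P \<in> Sing {..<4} 4 (Xcoef b)" and v0: "v0 \<in> {..<4}" and "y \<in> P" "y v0 = 1"
    obtain y' where y': "is_sing_vec {..<4} 4 (Xcoef b) y'" "P = proj_class {..<4} y'"
      using P by (auto simp: Sing_def)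
    then obtain c where "c \<noteq> 0" "y = (\<lambda>v. c * y' v)"
      using \<open>y \<in> P\<close> by (auto simp: is_sing_vec_def nzvec_def elim: proj_classE)
    then have "is_sing_vec {..<4} 4 (Xcoef b) y" using is_sing_vec_Xcoef_scale[OF ch y'(1)] by simp
    then show "smooth_hyp ({..<4} - {v0}) 2 (\<lambda>\<alpha>. hasse {..<4} 4 (Xcoef b) \<alpha> y)"
      using tangent_cone_Xcoef_smooth[OF ch generic] v0 \<open>y v0 = 1\<close> by simp
  qed simp
qed

theorem mainTheorem7:
  fixes b :: "(nat \<Rightarrow> nat) \<Rightarrow> 'a::alg_closed_field"
  assumes "CHAR('a) = 2"
  shows "(finite (CB b) \<and> (\<forall>P\<in>CB b. \<forall>x\<in>P. x 0 \<noteq> 0) \<longrightarrow>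
            finite (Sing {..<4} 4 (Xcoef b)) \<and>
            card (Sing {..<4} 4 (Xcoef b)) = 2 * card (CB b))
       \<and> (\<exists>D (pc :: ((nat \<Rightarrow> nat) \<Rightarrow> nat) \<Rightarrow> 'a).
            (\<exists>b0. peval (mons {..<3} 4) D pc b0 \<noteq> 0) \<and>
            (\<forall>b'. peval (mons {..<3} 4) D pc b' \<noteq> 0 \<longrightarrow>
                 finite (Sing {..<4} 4 (Xcoef b')) \<and>
                 card (Sing {..<4} 4 (Xcoef b')) = 14 \<and>
                 (\<forall>P\<in>Sing {..<4} 4 (Xcoef b'). is_node {..<4} 4 (Xcoef b') P)))"
proof -
  obtain D and pc :: "((nat \<Rightarrow> nat) \<Rightarrow> nat) \<Rightarrow> 'a"
    where pc: "\<And>b. generic_poly b = peval (mons {..<3} 4) D pc b"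
    using poly_fun_generic_poly unfolding poly_fun_def by blast
  have "peval (mons {..<3} 4) D pc klein_quartic \<noteq> 0"
    using generic_poly_klein_quartic[where 'a = 'a] by (simp add: pc)
  then show ?thesis
    using card_Sing_Xcoef_CHAR2[OF assms] crit_vecs_first_nonzero_of_CB[OF assms]
      Sing_Xcoef_generic[OF assms, unfolded pc]
    by (intro conjI impI exI[of _ D] exI[of _ pc] allI) blast+
qed

end
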